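(* Let $H$ be a Hilbert space, let $\mathbf{a}=[a_1,\dots,a_\ell]$ be a row and $\mathbf{b}=[b_1,\dots,b_\ell]^t$ a column of operators in $\mathcal{B}(H)$, and let $Tx=\sum_{j=1}^\ell a_jxb_j$ ($x\in\mathcal{B}(H)$). Then \[ \|T\|=\sup\left\{\left\|\sqrt{Q(\mathbf{b},\eta)^t}\,\mathbf{a}^*\right\|_{S1}:\eta\in H,\ \|\eta\|=1\right\}. \]
   Context: For $\eta\in H$, $Q(\mathbf{b},\eta)=(\langle b_j\eta,b_i\eta\rangle)_{i,j=1}^\ell\in M_\ell(\mathbb{C})$, which is positive semidefinite; $\sqrt{Q(\mathbf{b},\eta)^t}$ is the positive semidefinite square root of its transpose. $\mathbf{a}^*=[a_1^*,\dots,a_\ell^*]^t$ is a column of operators, and for a scalar matrix $\alpha=(\alpha_{jk})\in M_\ell(\mathbb{C})$, $\alpha\mathbf{a}^*$ is the column whose $j$-th entry is $\sum_k\alpha_{jk}a_k^*$. On $H^\ell$ define the norm $\|(\xi_1,\dots,\xi_\ell)\|_{S1}=\operatorname{trace}\sqrt{(\langle\xi_i,\xi_j\rangle)_{i,j=1}^\ell}$. For a column $\mathbf{c}=[c_1,\dots,c_\ell]^t$ of operators in $\mathcal{B}(H)$, regarded as an operator $H\to H^\ell$, $\xi\mapsto(c_1\xi,\dots,c_\ell\xi)$, $\|\mathbf{c}\|_{S1}$ denotes its operator norm from $H$ (Hilbert norm) to $(H^\ell,\|\cdot\|_{S1})$. $\|T\|$ is the operator norm on $\mathcal{B}(H)$.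 *)

theory Defs
  imports "HOL-Analysis.Analysis"
begin

class chilbert_space = banach +
  fixes scaleC :: "complex \<Rightarrow> 'a \<Rightarrow> 'a"
    and cinner :: "'a \<Rightarrow> 'a \<Rightarrow> complex"
  assumes scaleC_add_right: "scaleC c (x + y) = scaleC c x + scaleC c y"
    and scaleC_add_left: "scaleC (c + d) x = scaleC c x + scaleC d x"
    and scaleC_scaleC: "scaleC c (scaleC d x) = scaleC (c * d) x"
    and scaleC_one: "scaleC 1 x = x"
    and scaleR_scaleC: "scaleR r x = scaleC (complex_of_real r) x"
    and cinner_add_left: "cinner (x + y) z = cinner x z + cinner y z"
    and cinner_scaleC_left: "cinner (scaleC c x) y = c * cinner x y"
    and cinner_commute: "cinner x y = cnj (cinner y x)"
    and cinner_self_norm: "cinner x x = complex_of_real ((norm x)\<^sup>2)"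

definition bounded_clinear :: "('a::chilbert_space \<Rightarrow> 'a) \<Rightarrow> bool" where
  "bounded_clinear f \<longleftrightarrow> bounded_linear f \<and> (\<forall>c x. f (scaleC c x) = scaleC c (f x))"

definition adj :: "('a::chilbert_space \<Rightarrow> 'a) \<Rightarrow> ('a \<Rightarrow> 'a)" where
  "adj f = (THE g. \<forall>x y. cinner (f x) y = cinner x (g y))"

definition psd_mat :: "complex^'n^'n \<Rightarrow> bool" where
  "psd_mat M \<longleftrightarrow> (\<forall>i j. M$i$j = cnj (M$j$i)) \<and>
     (\<forall>v::complex^'n. 0 \<le> Re (\<Sum>i\<in>UNIV. \<Sum>j\<in>UNIV. cnj (v$i) * M$i$j * v$j))"

definition msqrt :: "complex^'n^'n \<Rightarrow> complex^'n^'n" where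
  "msqrt M = (THE S. psd_mat S \<and> S ** S = M)"

definition mtrace :: "complex^'n^'n \<Rightarrow> complex" where
  "mtrace M = (\<Sum>i\<in>UNIV. M$i$i)"

definition Qmat :: "('n \<Rightarrow> ('a::chilbert_space \<Rightarrow> 'a)) \<Rightarrow> 'a \<Rightarrow> complex^'n^'n" where
  "Qmat b \<eta> = (\<chi> i j. cinner (b j \<eta>) (b i \<eta>))"

definition S1_norm_vec :: "('n::finite \<Rightarrow> 'a::chilbert_space) \<Rightarrow> real" where
  "S1_norm_vec \<xi> = Re (mtrace (msqrt (\<chi> i j. cinner (\<xi> i) (\<xi> j))))"

definition S1_norm_col :: "('n::finite \<Rightarrow> ('a::chilbert_space \<Rightarrow> 'a)) \<Rightarrow> real" where
  "S1_norm_col c = Sup {S1_norm_vec (\<lambda>i. c i \<xi>) | \<xi>. norm \<xi> \<le> 1}"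

definition mat_times_adj_col ::
  "complex^'n^'n \<Rightarrow> ('n::finite \<Rightarrow> ('a::chilbert_space \<Rightarrow> 'a)) \<Rightarrow> ('n \<Rightarrow> ('a \<Rightarrow> 'a))" where
  "mat_times_adj_col \<alpha> a = (\<lambda>j \<xi>. \<Sum>k\<in>UNIV. scaleC (\<alpha>$j$k) (adj (a k) \<xi>))"

definition elem_op ::
  "('n::finite \<Rightarrow> ('a::chilbert_space \<Rightarrow> 'a)) \<Rightarrow> ('n \<Rightarrow> ('a \<Rightarrow> 'a)) \<Rightarrow> ('a \<Rightarrow> 'a) \<Rightarrow> ('a \<Rightarrow> 'a)" where
  "elem_op a b x = (\<lambda>\<xi>. \<Sum>j\<in>UNIV. a j (x (b j \<xi>)))"

definition BH_map_norm :: "(('a::chilbert_space \<Rightarrow> 'a) \<Rightarrow> ('a \<Rightarrow> 'a)) \<Rightarrow> real" where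
  "BH_map_norm T = Sup {onorm (T x) | x. bounded_clinear x \<and> onorm x \<le> 1}"

end

theory Submission
  imports Defs
begin

text \<open>Since cinner (T x eta) xi = sum_j cinner (x (b_j eta)) (a_j^* xi), everything reduces to the
  norm of the functional x |-> sum_j cinner (x v_j) w_j on the unit ball of B(H), for fixed
  columns v, w.  Diagonalising the Gram matrix of v writes v_j = sum_m phi_m(j) h_m with
  orthogonal h_m; normalising the h_m turns the functional into sum_m cinner (x g_m) z_m with
  orthonormal g_m, where z is the column sqrt(Q(b,eta)^t) a^* xi up to the unitary phi.
  Writing in turn z = psi p with orthogonal p, Cauchy-Schwarz bounds the functional by
  norm x * sum_n norm p_n = norm x * S1 norm of z, and the partial isometry sending the unit
  vectors sum_m cnj (psi_n(m)) g_m to p_n / norm p_n attains the bound.  The S1 norm is computed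
  throughout from such orthogonal decompositions, which exist by the spectral theorem for
  Hermitian matrices; Riesz representation provides the adjoints a_j^*.\<close>

lemma scaleC_zero_right [simp]: "scaleC c 0 = 0"
  using scaleC_add_right[of c 0 0] by simp

lemma scaleC_zero_left [simp]: "scaleC 0 x = 0"
  using scaleC_add_left[of 0 0 x] by simp

lemma scaleC_minus_right: "scaleC c (- x) = - scaleC c x"
  using minus_unique[of "scaleC c x" "scaleC c (- x)"] scaleC_add_right[of c x "- x"] by simp

lemma scaleC_diff_right: "scaleC c (x - y) = scaleC c x - scaleC c y"
  by (simp only: diff_conv_add_uminus scaleC_add_right scaleC_minus_right)

lemma scaleC_sum_right: "scaleC c (sum f A) = (\<Sum>i\<in>A. scaleC c (f i))"
  by (induction A rule: infinite_finite_induct) (auto simp: scaleC_add_right)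

lemma scaleC_sum_left: "scaleC (sum f A) x = (\<Sum>i\<in>A. scaleC (f i) x)"
  by (induction A rule: infinite_finite_induct) (auto simp: scaleC_add_left)

lemma cinner_zero_left [simp]: "cinner 0 y = 0"
  using cinner_add_left[of 0 0 y] by simp

lemma cinner_minus_left: "cinner (- x) y = - cinner x y"
  using minus_unique[of "cinner x y" "cinner (- x) y"] cinner_add_left[of x "- x" y] by simp

lemma cinner_diff_left: "cinner (x - y) z = cinner x z - cinner y z"
  by (simp only: diff_conv_add_uminus cinner_add_left cinner_minus_left)

lemma cinner_sum_left: "cinner (sum f A) y = (\<Sum>i\<in>A. cinner (f i) y)"
  by (induction A rule: infinite_finite_induct) (auto simp: cinner_add_left)

lemma cinner_add_right: "cinner x (y + z) = cinner x y + cinner x z"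
  by (metis cinner_commute cinner_add_left complex_cnj_add)

lemma cinner_scaleC_right: "cinner x (scaleC c y) = cnj c * cinner x y"
  by (metis cinner_commute cinner_scaleC_left complex_cnj_mult)

lemma cinner_zero_right [simp]: "cinner x 0 = 0"
  by (metis cinner_commute cinner_zero_left complex_cnj_zero)

lemma cinner_diff_right: "cinner x (y - z) = cinner x y - cinner x z"
  by (metis cinner_commute cinner_diff_left complex_cnj_diff)

lemma cinner_sum_right: "cinner x (sum f A) = (\<Sum>i\<in>A. cinner x (f i))"
  by (induction A rule: infinite_finite_induct) (auto simp: cinner_add_right)

lemma cinner_self_Re: "Re (cinner x x) = (norm x)\<^sup>2"
  by (simp add: cinner_self_norm)

lemma cnj_cinner_self [simp]: "cnj (cinner x x) = cinner x x"
  by (simp add: cinner_self_norm)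

lemma cinner_self_eq_0 [simp]: "cinner x x = 0 \<longleftrightarrow> x = 0"
  by (simp add: cinner_self_norm)

lemma cinner_eq_0_commute: "cinner x y = 0 \<longleftrightarrow> cinner y x = 0"
  by (metis cinner_commute complex_cnj_zero)

lemma mult_cnj_self: "c * cnj c = (complex_of_real (cmod c))\<^sup>2" "cnj c * c = (complex_of_real (cmod c))\<^sup>2"
  using complex_norm_square[of c] by (simp_all add: mult.commute)

lemma norm_scaleC: "norm (scaleC c x) = cmod c * norm x"
proof -
  have "cinner (scaleC c x) (scaleC c x) = (c * cnj c) * cinner x x"
    by (simp add: cinner_scaleC_left cinner_scaleC_right mult.assoc)
  then have "(norm (scaleC c x))\<^sup>2 = (cmod c * norm x)\<^sup>2"
    by (simp only: cinner_self_norm complex_norm_square[symmetric] of_real_mult[symmetric]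
        of_real_eq_iff power_mult_distrib)
  then show ?thesis by (simp add: power2_eq_iff_nonneg)
qed

lemma cinner_ext: "(\<And>z. cinner x z = cinner y z) \<Longrightarrow> x = y"
  using cinner_self_eq_0[of "x - y"] by (simp add: cinner_diff_left)

lemma norm_diff_scaleC_sq:
  "(norm (x - scaleC t y))\<^sup>2 = (norm x)\<^sup>2 - 2 * Re (cnj t * cinner x y) + (cmod t)\<^sup>2 * (norm y)\<^sup>2"
proof -
  have "cinner (x - scaleC t y) (x - scaleC t y) =
      cinner x x - cnj t * cinner x y - t * cinner y x + t * cnj t * cinner y y"
    by (simp add: cinner_diff_left cinner_diff_right cinner_scaleC_left cinner_scaleC_right algebra_simps)
  also have "t * cinner y x = cnj (cnj t * cinner x y)"
    by (simp add: cinner_commute[of y x])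
  also have "t * cnj t = complex_of_real ((cmod t)\<^sup>2)"
    using mult_cnj_self(1)[of t] by simp
  finally have "Re (cinner (x - scaleC t y) (x - scaleC t y)) =
      Re (cinner x x) - 2 * Re (cnj t * cinner x y) + (cmod t)\<^sup>2 * Re (cinner y y)"
    by (simp add: cinner_self_norm)
  then show ?thesis by (simp add: cinner_self_Re)
qed

lemma cmod_cinner_le: "cmod (cinner x y) \<le> norm x * norm y"
proof (cases "y = 0")
  case False
  define c where "c = cinner x y"
  define s where "s = (norm y)\<^sup>2"
  have s: "s > 0" using False by (simp add: s_def)
  have "cnj (c / of_real s) * c = of_real ((cmod c)\<^sup>2 / s)"
    using mult_cnj_self(2)[of c] by simp
  then have "(norm (x - scaleC (c / of_real s) y))\<^sup>2 = (norm x)\<^sup>2 - (cmod c)\<^sup>2 / s"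
    using s unfolding norm_diff_scaleC_sq c_def[symmetric] s_def[symmetric]
    by (simp add: norm_divide power_divide power2_eq_square)
  then have "(cmod c)\<^sup>2 / s \<le> (norm x)\<^sup>2"
    by (metis diff_ge_0_iff_ge zero_le_power2)
  then have "(cmod c)\<^sup>2 \<le> (norm x * norm y)\<^sup>2"
    using s by (simp add: s_def power_mult_distrib divide_le_eq)
  then show ?thesis unfolding c_def by (rule power2_le_imp_le) simp
qed simp

lemma parallelogram_law:
  fixes x y :: "'a::chilbert_space"
  shows "(norm (x + y))\<^sup>2 + (norm (x - y))\<^sup>2 = 2 * (norm x)\<^sup>2 + 2 * (norm y)\<^sup>2"
proof -
  have "cinner (x + y) (x + y) + cinner (x - y) (x - y) = 2 * cinner x x + 2 * cinner y y"
    by (simp add: cinner_add_left cinner_add_right cinner_diff_left cinner_diff_right algebra_simps)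
  then have "Re (cinner (x + y) (x + y)) + Re (cinner (x - y) (x - y)) = 2 * Re (cinner x x) + 2 * Re (cinner y y)"
    by (metis plus_complex.sel(1) Re_complex_of_real mult_2)
  then show ?thesis by (simp add: cinner_self_Re)
qed

definition csubspace :: "'a::chilbert_space set \<Rightarrow> bool" where
  "csubspace N \<longleftrightarrow> 0 \<in> N \<and> (\<forall>x\<in>N. \<forall>y\<in>N. x + y \<in> N) \<and> (\<forall>c. \<forall>x\<in>N. scaleC c x \<in> N)"

lemma csubspace_0: "csubspace N \<Longrightarrow> 0 \<in> N"
  and csubspace_add: "csubspace N \<Longrightarrow> x \<in> N \<Longrightarrow> y \<in> N \<Longrightarrow> x + y \<in> N"
  and csubspace_scaleC: "csubspace N \<Longrightarrow> x \<in> N \<Longrightarrow> scaleC c x \<in> N"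
  by (auto simp: csubspace_def)

lemma csubspace_diff:
  assumes "csubspace N" "x \<in> N" "y \<in> N"
  shows "x - y \<in> N"
proof -
  have "scaleC (-1) y = - y"
    using minus_unique[of y "scaleC (-1) y"] scaleC_add_left[of 1 "-1" y] by (simp add: scaleC_one)
  then show ?thesis
    using csubspace_add[OF assms(1,2) csubspace_scaleC[OF assms(1,3), of "-1"]] by simp
qed

lemma norm_diff_le_midpoint:
  assumes "0 \<le> d" "d \<le> norm (x - scaleC (1/2) (p + q))"
  shows "(norm (p - q))\<^sup>2 \<le> 2 * (norm (x - p))\<^sup>2 + 2 * (norm (x - q))\<^sup>2 - 4 * d\<^sup>2"
proof -
  have "(x - p) + (x - q) = scaleC 2 (x - scaleC (1/2) (p + q))"
    by (simp add: scaleC_diff_right scaleC_scaleC scaleC_add_left[of 1 1, simplified] scaleC_one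
        algebra_simps)
  then have "2 * d \<le> norm ((x - p) + (x - q))"
    using assms(2) by (simp add: norm_scaleC)
  then have "4 * d\<^sup>2 \<le> (norm ((x - p) + (x - q)))\<^sup>2"
    using assms(1) power_mono[of "2 * d" _ 2] by (simp add: power_mult_distrib)
  then show ?thesis
    using parallelogram_law[of "x - p" "x - q"] by (simp add: norm_minus_commute)
qed

lemma Cauchy_minimizing_sequence:
  assumes N: "csubspace N" and sN: "\<And>k. s k \<in> N" and "0 \<le> d"
    and d_le: "\<And>n. n \<in> N \<Longrightarrow> d \<le> norm (x - n)"
    and s_lt: "\<And>k. (norm (x - s k))\<^sup>2 < d\<^sup>2 + inverse (real (Suc k))"
  shows "Cauchy s"
proof (rule CauchyI)
  fix e :: real assume e: "e > 0"
  obtain M where M: "inverse (real (Suc M)) < e\<^sup>2 / 4"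
    using reals_Archimedean[of "e\<^sup>2/4"] e by auto
  have "norm (s m - s n) < e" if "M \<le> m" "M \<le> n" for m n
  proof -
    have "inverse (real (Suc m)) \<le> inverse (real (Suc M))" "inverse (real (Suc n)) \<le> inverse (real (Suc M))"
      using that by (auto simp: field_simps)
    moreover have "d \<le> norm (x - scaleC (1/2) (s m + s n))"
      by (intro d_le csubspace_scaleC csubspace_add N sN)
    note norm_diff_le_midpoint[OF \<open>0 \<le> d\<close> this]
    ultimately have "(norm (s m - s n))\<^sup>2 < e\<^sup>2"
      using s_lt[of m] s_lt[of n] M by linarith
    then show ?thesis using e by (simp add: power_less_imp_less_base)
  qed
  then show "\<exists>M. \<forall>m\<ge>M. \<forall>n\<ge>M. norm (s m - s n) < e" by blast
qed

lemma closed_csubspace_nearest_point: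
  assumes "closed N" "csubspace N"
  obtains n0 where "n0 \<in> N" "\<And>n. n \<in> N \<Longrightarrow> norm (x - n0) \<le> norm (x - n)"
proof -
  define d where "d = infdist x N"
  have d0: "0 \<le> d" by (simp add: d_def infdist_nonneg)
  have d_le: "d \<le> norm (x - n)" if "n \<in> N" for n
    using infdist_le[OF that, of x] by (simp add: d_def dist_norm)
  have "\<exists>n\<in>N. (norm (x - n))\<^sup>2 < d\<^sup>2 + inverse (real (Suc k))" for k
  proof -
    have ne: "N \<noteq> {}" using csubspace_0[OF assms(2)] by auto
    have "(INF n\<in>N. dist x n) < sqrt (d\<^sup>2 + inverse (real (Suc k)))"
      using d0 by (simp add: d_def infdist_notempty[OF ne, symmetric] real_less_rsqrt)
    then obtain n where "n \<in> N" "norm (x - n) < sqrt (d\<^sup>2 + inverse (real (Suc k)))"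
      unfolding cINF_less_iff[OF ne bdd_below_image_dist] by (auto simp: dist_norm)
    then show ?thesis
      by (metis norm_ge_zero power_strict_mono real_sqrt_pow2 real_sqrt_lt_0_iff linorder_not_le
          pos2 zero_le_power2 add_nonneg_nonneg inverse_nonnegative_iff_nonnegative of_nat_0_le_iff)
  qed
  then obtain s where sN: "\<And>k. s k \<in> N"
    and s_lt: "\<And>k. (norm (x - s k))\<^sup>2 < d\<^sup>2 + inverse (real (Suc k))"
    by metis
  have "Cauchy s" by (rule Cauchy_minimizing_sequence[OF assms(2) sN d0 d_le s_lt])
  then obtain n0 where lim: "s \<longlonglongrightarrow> n0" using Cauchy_convergent_iff convergent_def by blast
  have "(norm (x - n0))\<^sup>2 \<le> d\<^sup>2"
  proof (rule LIMSEQ_le)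
    show "(\<lambda>k. (norm (x - s k))\<^sup>2) \<longlonglongrightarrow> (norm (x - n0))\<^sup>2" by (intro tendsto_intros lim)
    show "(\<lambda>k. d\<^sup>2 + inverse (real (Suc k))) \<longlonglongrightarrow> d\<^sup>2"
      using tendsto_add[OF tendsto_const LIMSEQ_inverse_real_of_nat] by simp
    show "\<exists>N. \<forall>k\<ge>N. (norm (x - s k))\<^sup>2 \<le> d\<^sup>2 + inverse (real (Suc k))"
      using s_lt less_imp_le by blast
  qed
  then have "norm (x - n0) \<le> d" using d0 by (simp add: power2_le_iff_abs_le)
  then show ?thesis
    using that closed_sequentially[OF assms(1) sN lim] d_le by force
qed

text \<open>Perturbing a nearest point n0 by a small multiple of c n, with
  c = cinner (x - n0) n, would decrease the distance unless c = 0.\<close>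

lemma nearest_point_orthogonal:
  assumes N: "csubspace N" and n0: "n0 \<in> N"
    and nearest: "\<And>n. n \<in> N \<Longrightarrow> norm (x - n0) \<le> norm (x - n)"
    and n: "n \<in> N"
  shows "cinner (x - n0) n = 0"
proof (rule ccontr)
  define e c where "e = x - n0" and "c = cinner (x - n0) n"
  assume "c \<noteq> 0"
  define r where "r = 1 / ((norm n)\<^sup>2 + 1)"
  have r0: "r > 0" and rn: "r * (norm n)\<^sup>2 < 1"
    by (simp_all add: r_def add_nonneg_pos)
  have "n0 + scaleC (of_real r * c) n \<in> N" by (intro csubspace_add csubspace_scaleC N n0 n)
  from nearest[OF this] have "norm e \<le> norm (e - scaleC (of_real r * c) n)"
    by (simp add: e_def algebra_simps)
  then have "(norm e)\<^sup>2 \<le> (norm (e - scaleC (of_real r * c) n))\<^sup>2"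
    by (intro power_mono) auto
  also have "\<dots> = (norm e)\<^sup>2 - 2 * r * (cmod c)\<^sup>2 + r\<^sup>2 * (cmod c)\<^sup>2 * (norm n)\<^sup>2"
    unfolding norm_diff_scaleC_sq
    using r0 by (simp add: e_def c_def[symmetric] complex_norm_square[symmetric] mult.assoc
        norm_mult power_mult_distrib mult.left_commute[of "cnj c"]) (metis cmod_power2 power2_eq_square)
  finally have "2 * r * (cmod c)\<^sup>2 \<le> r * (cmod c)\<^sup>2 * (r * (norm n)\<^sup>2)"
    by (simp add: power2_eq_square algebra_simps)
  also have "\<dots> < r * (cmod c)\<^sup>2 * 1"
    using rn r0 \<open>c \<noteq> 0\<close> by (intro mult_strict_left_mono) auto
  finally show False using r0 \<open>c \<noteq> 0\<close> by simp
qed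

lemma riesz_representation:
  fixes f :: "'a::chilbert_space \<Rightarrow> complex"
  assumes f: "bounded_linear f" and f_scaleC: "\<And>c x. f (scaleC c x) = c * f x"
  obtains z where "\<And>x. f x = cinner x z"
proof (cases "\<forall>x. f x = 0")
  case True
  then show ?thesis using that[of 0] by simp
next
  case False
  then obtain x0 where fx0: "f x0 \<noteq> 0" by auto
  interpret bounded_linear f by (rule f)
  define N where "N = {x. f x = 0}"
  have "closed N" unfolding N_def
    by (rule closed_Collect_eq) (auto intro: linear_continuous_on f)
  moreover have N: "csubspace N"
    by (simp add: csubspace_def N_def add f_scaleC)
  ultimately obtain n0 where n0: "n0 \<in> N" and nearest: "\<And>n. n \<in> N \<Longrightarrow> norm (x0 - n0) \<le> norm (x0 - n)"
    using closed_csubspace_nearest_point by blast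
  define e where "e = x0 - n0"
  have orth: "cinner e n = 0" if "n \<in> N" for n
    unfolding e_def by (rule nearest_point_orthogonal[OF N n0 nearest that])
  have fe: "f e = f x0" using n0 by (simp add: e_def diff N_def)
  have ee: "cinner e e \<noteq> 0" using fe fx0 by (auto simp: zero)
  have "f x = cinner x (scaleC (cnj (f e) / cnj (cinner e e)) e)" for x
  proof -
    have "f (scaleC (f x) e - scaleC (f e) x) = 0" by (simp add: diff f_scaleC)
    then have "cinner e (scaleC (f x) e - scaleC (f e) x) = 0" using orth by (simp add: N_def)
    then have "f x * cnj (cinner e e) = f e * cinner x e"
      by (simp add: cinner_diff_right cinner_scaleC_right) (metis cinner_commute complex_cnj_cnj complex_cnj_mult)
    then show ?thesis using ee by (simp add: cinner_scaleC_right field_simps)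
  qed
  then show ?thesis using that by blast
qed

lemma bounded_clinearD:
  assumes "bounded_clinear a"
  shows "bounded_linear a" "a (scaleC c x) = scaleC c (a x)"
  using assms by (auto simp: bounded_clinear_def)

lemma bounded_clinear_sum:
  assumes "bounded_clinear x"
  shows "x (\<Sum>m\<in>A. scaleC (c m) (v m)) = (\<Sum>m\<in>A. scaleC (c m) (x (v m)))"
proof -
  interpret bounded_linear x using bounded_clinearD(1)[OF assms] .
  show ?thesis
    by (induction A rule: infinite_finite_induct) (auto simp: add zero bounded_clinearD(2)[OF assms])
qed

lemma bounded_linear_cinner_left: "bounded_linear (\<lambda>x. cinner x b)"
proof (rule bounded_linear_intro[where K = "norm b"])
  show "cinner (r *\<^sub>R x) b = r *\<^sub>R cinner x b" for r x
    by (simp add: scaleR_scaleC cinner_scaleC_left scaleR_conv_of_real)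
qed (simp_all add: cinner_add_left cmod_cinner_le)

lemma cinner_adj:
  fixes a :: "'a::chilbert_space \<Rightarrow> 'a"
  assumes a: "bounded_clinear a"
  shows "cinner (a x) y = cinner x (adj a y)"
proof -
  have "\<exists>z. \<forall>x. cinner (a x) y = cinner x z" for y
  proof -
    have "bounded_linear (\<lambda>x. cinner (a x) y)"
      using bounded_linear_compose[OF bounded_linear_cinner_left bounded_clinearD(1)[OF a]] .
    then show ?thesis
      using riesz_representation[of "\<lambda>x. cinner (a x) y"]
      by (metis bounded_clinearD(2)[OF a] cinner_scaleC_left)
  qed
  then obtain g where g: "\<And>x y. cinner (a x) y = cinner x (g y)" by metis
  have "\<exists>!g. \<forall>x y. cinner (a x) y = cinner x (g y)"
  proof (rule ex1I[of _ g])
    fix g' assume "\<forall>x y. cinner (a x) y = cinner x (g' y)"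
    then show "g' = g"
      by (intro ext cinner_ext) (metis cinner_commute g)
  qed (use g in blast)
  then have "\<forall>x y. cinner (a x) y = cinner x (adj a y)"
    unfolding adj_def by (rule theI')
  then show ?thesis by blast
qed

instantiation complex :: chilbert_space
begin

definition scaleC_complex :: "complex \<Rightarrow> complex \<Rightarrow> complex" where
  "scaleC_complex c x = c * x"

definition cinner_complex :: "complex \<Rightarrow> complex \<Rightarrow> complex" where
  "cinner_complex x y = x * cnj y"

instance
proof
  fix c d x y z :: complex and r :: real
  show "scaleC c (x + y) = scaleC c x + scaleC c y" "scaleC (c + d) x = scaleC c x + scaleC d x"
    "scaleC c (scaleC d x) = scaleC (c * d) x" "scaleC 1 x = x" "r *\<^sub>R x = scaleC (of_real r) x"
    by (simp_all add: scaleC_complex_def scaleR_conv_of_real algebra_simps)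
  show "cinner (x + y) z = cinner x z + cinner y z" "cinner (scaleC c x) y = c * cinner x y"
    "cinner x y = cnj (cinner y x)"
    by (simp_all add: cinner_complex_def scaleC_complex_def algebra_simps)
  show "cinner x x = of_real ((norm x)\<^sup>2)"
    by (simp add: cinner_complex_def complex_norm_square del: of_real_power)
qed

end

instantiation vec :: (chilbert_space, finite) chilbert_space
begin

definition scaleC_vec :: "complex \<Rightarrow> 'a^'b \<Rightarrow> 'a^'b" where
  "scaleC_vec c x = (\<chi> i. scaleC c (x$i))"

definition cinner_vec :: "'a^'b \<Rightarrow> 'a^'b \<Rightarrow> complex" where
  "cinner_vec x y = (\<Sum>i\<in>UNIV. cinner (x$i) (y$i))"

instance
proof
  fix c d :: complex and x y z :: "'a^'b" and r :: real
  show "scaleC c (x + y) = scaleC c x + scaleC c y" "scaleC (c + d) x = scaleC c x + scaleC d x"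
    "scaleC c (scaleC d x) = scaleC (c * d) x" "scaleC 1 x = x" "r *\<^sub>R x = scaleC (of_real r) x"
    by (simp_all add: scaleC_vec_def vec_eq_iff scaleC_add_right scaleC_add_left scaleC_scaleC
        scaleC_one scaleR_scaleC)
  show "cinner (x + y) z = cinner x z + cinner y z" "cinner (scaleC c x) y = c * cinner x y"
    "cinner x y = cnj (cinner y x)"
    by (simp_all add: cinner_vec_def scaleC_vec_def cinner_add_left cinner_scaleC_left sum.distrib
        sum_distrib_left cnj_sum cinner_commute[of "x$i" "y$i" for i])
  have "(norm x)\<^sup>2 = (\<Sum>i\<in>UNIV. (norm (x$i))\<^sup>2)"
    unfolding norm_vec_def L2_set_def by (simp add: sum_nonneg)
  then show "cinner x x = of_real ((norm x)\<^sup>2)"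
    by (simp add: cinner_vec_def cinner_self_norm del: of_real_power)
qed

end

lemma scaleC_cvec: "scaleC c (x::complex^'n) = c *s x"
  by (simp add: scaleC_vec_def scaleC_complex_def vec_eq_iff)

lemma cinner_cvec: "cinner (x::complex^'n) y = (\<Sum>i\<in>UNIV. x$i * cnj (y$i))"
  by (simp add: cinner_vec_def cinner_complex_def)

definition herm :: "complex^'n^'n \<Rightarrow> bool" where
  "herm M \<longleftrightarrow> (\<forall>i j. M$i$j = cnj (M$j$i))"

definition orthonormal :: "('n \<Rightarrow> 'a::chilbert_space) \<Rightarrow> bool" where
  "orthonormal \<phi> \<longleftrightarrow> (\<forall>m m'. cinner (\<phi> m) (\<phi> m') = (if m = m' then 1 else 0))"

lemma matrix_vector_mult_scaleC: "(M::complex^'n^'n) *v (scaleC c x) = scaleC c (M *v x)"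
  by (simp add: scaleC_cvec vec_eq_iff matrix_vector_mult_def sum_distrib_left algebra_simps)

lemma matrix_vector_mult_sum: "(M::complex^'n^'n) *v (\<Sum>a\<in>A. f a) = (\<Sum>a\<in>A. M *v f a)"
  by (induction A rule: infinite_finite_induct) (auto simp: matrix_vector_right_distrib)

lemma cinner_matrix_vector_mult: "cinner (M *v x) y = (\<Sum>i\<in>UNIV. \<Sum>j\<in>UNIV. M$i$j * x$j * cnj (y$i))"
  by (simp add: cinner_cvec matrix_vector_mult_def sum_distrib_right)

lemma herm_cinner_commute:
  assumes "herm M"
  shows "cinner (M *v x) y = cinner x (M *v y)"
proof -
  have "cinner (M *v x) y = (\<Sum>j\<in>UNIV. \<Sum>i\<in>UNIV. M$i$j * x$j * cnj (y$i))"
    unfolding cinner_matrix_vector_mult by (rule sum.swap)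
  also have "\<dots> = (\<Sum>j\<in>UNIV. x$j * cnj (\<Sum>i\<in>UNIV. M$j$i * y$i))"
  proof (rule sum.cong[OF refl])
    fix j
    have "x$j * cnj (\<Sum>i\<in>UNIV. M$j$i * y$i) = (\<Sum>i\<in>UNIV. x$j * (cnj (M$j$i) * cnj (y$i)))"
      by (simp add: cnj_sum sum_distrib_left)
    also have "\<dots> = (\<Sum>i\<in>UNIV. M$i$j * x$j * cnj (y$i))"
      using assms unfolding herm_def by (intro sum.cong refl) (metis mult.commute mult.left_commute)
    finally show "(\<Sum>i\<in>UNIV. M$i$j * x$j * cnj (y$i)) = x$j * cnj (\<Sum>i\<in>UNIV. M$j$i * y$i)" by simp
  qed
  also have "\<dots> = cinner x (M *v y)"
    by (simp add: cinner_cvec matrix_vector_mult_def)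
  finally show ?thesis .
qed

lemma herm_cinner_self_real:
  assumes "herm M"
  shows "cinner (M *v x) x = of_real (Re (cinner (M *v x) x))"
proof -
  have "cnj (cinner (M *v x) x) = cinner (M *v x) x"
    using herm_cinner_commute[OF assms, of x x] by (simp add: cinner_commute[of x])
  then show ?thesis by (simp add: complex_eq_iff)
qed

lemma orthonormal_set_complement:
  fixes B :: "(complex^'n) set"
  assumes fB: "finite B" and cB: "card B < CARD('n)"
    and onB: "\<And>b b'. b \<in> B \<Longrightarrow> b' \<in> B \<Longrightarrow> cinner b b' = (if b = b' then 1 else 0)"
  obtains x where "x \<noteq> 0" "\<And>b. b \<in> B \<Longrightarrow> cinner x b = 0"
proof -
  define P where "P x = (\<Sum>b\<in>B. scaleC (cinner x b) b)" for x
  have orth: "cinner (x - P x) b' = 0" if "b' \<in> B" for x b'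
  proof -
    have "(\<Sum>b\<in>B. cinner x b * cinner b b') = (\<Sum>b\<in>B. if b = b' then cinner x b else 0)"
      by (rule sum.cong) (auto simp: onB that)
    then show ?thesis
      using that fB by (simp add: P_def cinner_diff_left cinner_sum_left cinner_scaleC_left sum.delta')
  qed
  have "\<exists>x. x - P x \<noteq> 0"
  proof (rule ccontr)
    assume "\<nexists>x. x - P x \<noteq> 0"
    have "x \<in> vec.span B" for x
    proof -
      have "x = P x" using \<open>\<nexists>x. x - P x \<noteq> 0\<close> by simp
      also have "\<dots> \<in> vec.span B"
        unfolding P_def scaleC_cvec by (intro vec.span_sum vec.span_scale vec.span_base)
      finally show ?thesis .
    qed
    then have "vec.dim (UNIV :: (complex^'n) set) \<le> card B"
      by (intro vec.dim_le_card fB) auto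
    then show False using cB vec_dim_card[where 'a=complex and 'n='n] by linarith
  qed
  then show ?thesis using that orth by blast
qed

lemma pos_le_mult_imp_nonpos:
  fixes Y A :: real
  assumes "\<And>t. t > 0 \<Longrightarrow> Y \<le> t * A"
  shows "Y \<le> 0"
proof (rule ccontr)
  assume "\<not> Y \<le> 0"
  then have "Y \<le> Y / (\<bar>A\<bar> + 1) * A" by (intro assms) (simp add: add_nonneg_pos)
  also have "\<dots> \<le> Y / (\<bar>A\<bar> + 1) * \<bar>A\<bar>"
    using \<open>\<not> Y \<le> 0\<close> by (intro mult_left_mono) auto
  also have "\<dots> < Y / (\<bar>A\<bar> + 1) * (\<bar>A\<bar> + 1)"
    using \<open>\<not> Y \<le> 0\<close> by (intro mult_strict_left_mono) (auto simp: add_nonneg_pos)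
  also have "\<dots> = Y" by (simp add: add_nonneg_pos)
  finally show False by simp
qed

text \<open>A maximiser e of the Rayleigh quotient on an invariant subspace is an eigenvector: for
  y = M e - \<lambda> e, which is orthogonal to e, the quotient at e + t y exceeds \<lambda> for small t > 0
  unless y = 0.\<close>

lemma herm_maximizer_eigenvector:
  fixes M :: "complex^'n^'n"
  assumes hM: "herm M" and W: "csubspace W" and inv: "\<And>x. x \<in> W \<Longrightarrow> M *v x \<in> W"
    and e: "e \<in> W" "norm e = 1"
    and max: "\<And>x. x \<in> W \<Longrightarrow> Re (cinner (M *v x) x) \<le> Re (cinner (M *v e) e) * (norm x)\<^sup>2"
  shows "M *v e = scaleC (of_real (Re (cinner (M *v e) e))) e"
proof -
  define lam where "lam = Re (cinner (M *v e) e)"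
  define y where "y = M *v e - scaleC (of_real lam) e"
  have ee: "cinner e e = 1" using e(2) by (simp add: cinner_self_norm)
  have Mee: "cinner (M *v e) e = of_real lam"
    unfolding lam_def by (rule herm_cinner_self_real[OF hM])
  have yW: "y \<in> W" unfolding y_def by (intro csubspace_diff csubspace_scaleC W inv e)
  have ye: "cinner y e = 0" by (simp add: y_def cinner_diff_left cinner_scaleC_left Mee ee)
  then have ey: "cinner e y = 0" by (simp add: cinner_eq_0_commute)
  have "cinner y y = cinner (M *v e) y - of_real lam * cinner e y"
    by (subst (1) y_def) (simp add: cinner_diff_left cinner_scaleC_left)
  then have Mey: "cinner (M *v e) y = cinner y y" by (simp add: ey)
  have Mye: "cinner (M *v y) e = cinner y y"
    using herm_cinner_commute[OF hM, of y e] Mey by (metis cinner_commute cnj_cinner_self)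
  define Y R where "Y = (norm y)\<^sup>2" and "R = Re (cinner (M *v y) y)"
  have "2 * Y \<le> t * (lam * Y - R)" if t: "t > 0" for t
  proof -
    define x where "x = e + scaleC (of_real t) y"
    have "cinner (M *v x) x = cinner (M *v e) e + of_real t * cinner (M *v e) y
        + of_real t * cinner (M *v y) e + of_real t * of_real t * cinner (M *v y) y"
      by (simp add: x_def matrix_vector_right_distrib matrix_vector_mult_scaleC cinner_add_left
          cinner_add_right cinner_scaleC_left cinner_scaleC_right algebra_simps)
    then have fx: "Re (cinner (M *v x) x) = lam + 2 * t * Y + t\<^sup>2 * R"
      by (simp add: Mee Mey Mye R_def Y_def cinner_self_norm power2_eq_square del: of_real_power)
    have "cinner x x = cinner e e + of_real t * cinner e y + of_real t * cinner y e
        + of_real t * of_real t * cinner y y"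
      by (simp add: x_def cinner_add_left cinner_add_right cinner_scaleC_left cinner_scaleC_right
          algebra_simps)
    then have "Re (cinner x x) = 1 + t\<^sup>2 * Y"
      by (simp add: e(2) ey ye Y_def cinner_self_norm power2_eq_square del: of_real_power)
    then have "(norm x)\<^sup>2 = 1 + t\<^sup>2 * Y" by (simp add: cinner_self_Re)
    with max[of x] fx have "lam + 2 * t * Y + t\<^sup>2 * R \<le> lam * (1 + t\<^sup>2 * Y)"
      unfolding lam_def[symmetric] x_def by (simp add: csubspace_add csubspace_scaleC W e yW)
    then have "t * (2 * Y) \<le> t * (t * (lam * Y - R))" by (simp add: algebra_simps power2_eq_square)
    then show ?thesis using t by simp
  qed
  then have "2 * Y \<le> 0" by (intro pos_le_mult_imp_nonpos)
  then have "y = 0" by (simp add: Y_def)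
  then show ?thesis by (simp add: y_def lam_def)
qed

lemma herm_invariant_csubspace_eigenvector:
  fixes M :: "complex^'n^'n"
  assumes hM: "herm M" and W: "csubspace W" "closed W" and inv: "\<And>x. x \<in> W \<Longrightarrow> M *v x \<in> W"
    and x0: "x0 \<in> W" "x0 \<noteq> 0"
  obtains e l where "e \<in> W" "norm e = 1" "M *v e = scaleC (of_real l) e"
proof -
  define f where "f x = Re (cinner (M *v x) x)" for x
  have f_scale: "f (scaleC (of_real r) x) = r\<^sup>2 * f x" for r x
    by (simp add: f_def matrix_vector_mult_scaleC cinner_scaleC_left cinner_scaleC_right power2_eq_square)
  have normalize: "scaleC (of_real (1 / norm x)) x \<in> W \<inter> sphere 0 1" if "x \<in> W" "x \<noteq> 0" for x
    using that by (simp add: csubspace_scaleC[OF W(1)] norm_scaleC norm_divide)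
  have "continuous_on UNIV f"
    unfolding f_def cinner_cvec
    by (intro continuous_intros linear_continuous_on matrix_vector_mul_bounded_linear)
  then have "continuous_on (W \<inter> sphere 0 1) f" by (rule continuous_on_subset) simp
  then obtain e where e: "e \<in> W \<inter> sphere 0 1" and e_max: "\<And>y. y \<in> W \<inter> sphere 0 1 \<Longrightarrow> f y \<le> f e"
    using continuous_attains_sup[OF closed_Int_compact[OF W(2) compact_sphere]] normalize[OF x0]
    by blast
  have "f x \<le> f e * (norm x)\<^sup>2" if "x \<in> W" for x
  proof (cases "x = 0")
    case False
    from e_max[OF normalize[OF that False]] have "(1 / norm x)\<^sup>2 * f x \<le> f e"
      unfolding f_scale .
    then show ?thesis using False by (simp add: field_simps)
  qed (simp add: f_def)
  then have "M *v e = scaleC (of_real (f e)) e"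
    using e unfolding f_def by (intro herm_maximizer_eigenvector[OF hM W(1) inv]) auto
  then show ?thesis using that e by auto
qed

lemma herm_eigenvector_orthogonal:
  fixes M :: "complex^'n^'n" and B :: "(complex^'n) set"
  assumes hM: "herm M" and fB: "finite B" and cB: "card B < CARD('n)"
    and onB: "\<And>b b'. b \<in> B \<Longrightarrow> b' \<in> B \<Longrightarrow> cinner b b' = (if b = b' then 1 else 0)"
    and eB: "\<And>b. b \<in> B \<Longrightarrow> \<exists>l::real. M *v b = scaleC (of_real l) b"
  obtains e l where "norm e = 1" "\<And>b. b \<in> B \<Longrightarrow> cinner e b = 0" "M *v e = scaleC (of_real l) e"
proof -
  define W where "W = {x. \<forall>b\<in>B. cinner x b = 0}"
  have W: "csubspace W"
    by (simp add: csubspace_def W_def cinner_add_left cinner_scaleC_left)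
  have "W = (\<Inter>b\<in>B. {x. cinner x b = 0})" by (auto simp: W_def)
  then have "closed W"
    by (simp add: closed_INT closed_Collect_eq continuous_on_const linear_continuous_on
        bounded_linear_cinner_left)
  moreover have "M *v x \<in> W" if "x \<in> W" for x
  proof -
    have "cinner (M *v x) b = 0" if "b \<in> B" for b
    proof -
      obtain l :: real where "M *v b = scaleC (of_real l) b" using eB \<open>b \<in> B\<close> by blast
      then show ?thesis
        using \<open>x \<in> W\<close> \<open>b \<in> B\<close> by (simp add: herm_cinner_commute[OF hM] cinner_scaleC_right W_def)
    qed
    then show ?thesis by (simp add: W_def)
  qed
  moreover obtain x0 where "x0 \<noteq> 0" "\<And>b. b \<in> B \<Longrightarrow> cinner x0 b = 0"
    using orthonormal_set_complement[OF fB cB] onB by blast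
  then have "x0 \<noteq> 0" "x0 \<in> W" by (auto simp: W_def)
  ultimately obtain e l where "e \<in> W" "norm e = 1" "M *v e = scaleC (of_real l) e"
    using herm_invariant_csubspace_eigenvector[OF hM W] by metis
  then show ?thesis using that by (auto simp: W_def)
qed

lemma herm_orthonormal_eigenvectors:
  fixes M :: "complex^'n^'n"
  assumes hM: "herm M"
  shows "k \<le> CARD('n) \<Longrightarrow> \<exists>B. finite B \<and> card B = k \<and>
     (\<forall>b\<in>B. \<forall>b'\<in>B. cinner b b' = (if b = b' then 1 else 0)) \<and>
     (\<forall>b\<in>B. \<exists>l::real. M *v b = scaleC (of_real l) b)"
proof (induction k)
  case 0
  show ?case by (intro exI[of _ "{}"]) simp
next
  case (Suc k)
  then obtain B where fB: "finite B" and cB: "card B = k"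
    and onB: "\<forall>b\<in>B. \<forall>b'\<in>B. cinner b b' = (if b = b' then 1 else 0)"
    and eB: "\<forall>b\<in>B. \<exists>l::real. M *v b = scaleC (of_real l) b" by auto
  obtain e l where e: "norm e = 1" "\<And>b. b \<in> B \<Longrightarrow> cinner e b = 0" "M *v e = scaleC (of_real l) e"
    using herm_eigenvector_orthogonal[OF hM fB] cB Suc.prems onB eB by (metis Suc_le_lessD)
  have ee: "cinner e e = 1" using e(1) by (simp add: cinner_self_norm)
  then have "e \<notin> B" using e(2) by fastforce
  moreover have "\<forall>b\<in>B. cinner b e = 0" using e(2) by (simp add: cinner_eq_0_commute)
  ultimately show ?case
    by (intro exI[of _ "insert e B"]) (use fB cB onB eB ee e in auto)
qed

lemma herm_eigenbasis:
  fixes M :: "complex^'n^'n"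
  assumes "herm M"
  obtains \<phi> :: "'n \<Rightarrow> complex^'n" and \<mu> :: "'n \<Rightarrow> real"
  where "orthonormal \<phi>" "\<And>m. M *v \<phi> m = scaleC (of_real (\<mu> m)) (\<phi> m)"
proof -
  obtain B where fB: "finite B" and cB: "card B = CARD('n)"
    and onB: "\<forall>b\<in>B. \<forall>b'\<in>B. cinner b b' = (if b = b' then 1 else 0)"
    and eB: "\<forall>b\<in>B. \<exists>l::real. M *v b = scaleC (of_real l) b"
    using herm_orthonormal_eigenvectors[OF assms order_refl] by blast
  obtain h where h: "bij_betw h (UNIV::'n set) B"
    using finite_same_card_bij[of "UNIV::'n set" B] fB cB by auto
  then have "orthonormal h"
    unfolding orthonormal_def using onB by (auto simp: bij_betw_def inj_on_def)
  moreover have "\<forall>m. \<exists>l::real. M *v h m = scaleC (of_real l) (h m)"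
    using eB h by (auto simp: bij_betw_def)
  then obtain \<mu> where "\<forall>m. M *v h m = scaleC (of_real (\<mu> m)) (h m)" by metis
  ultimately show ?thesis using that by blast
qed

lemma orthonormalD: "orthonormal \<phi> \<Longrightarrow> cinner (\<phi> m) (\<phi> m') = (if m = m' then 1 else 0)"
  by (simp add: orthonormal_def)

lemma orthonormal_complete:
  fixes \<phi> :: "'n \<Rightarrow> complex^'n"
  assumes "orthonormal \<phi>"
  shows "(\<Sum>m\<in>UNIV. \<phi> m $ i * cnj (\<phi> m $ j)) = (if i = j then 1 else 0)"
proof -
  define U :: "complex^'n^'n" where "U = (\<chi> i m. \<phi> m $ i)"
  define V :: "complex^'n^'n" where "V = (\<chi> m i. cnj (\<phi> m $ i))"
  have "V ** U = mat 1"
    using assms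
    by (simp add: vec_eq_iff U_def V_def matrix_matrix_mult_def cinner_cvec orthonormal_def mat_def
        mult.commute)
  then have "U ** V = mat 1" using matrix_left_right_inverse by blast
  then have "(U ** V) $ i $ j = mat 1 $ i $ j" by simp
  then show ?thesis by (simp add: U_def V_def matrix_matrix_mult_def mat_def)
qed

lemma orthonormal_expand:
  fixes \<phi> :: "'n \<Rightarrow> complex^'n"
  assumes "orthonormal \<phi>"
  shows "x = (\<Sum>m\<in>UNIV. scaleC (cinner x (\<phi> m)) (\<phi> m))"
proof -
  have "(\<Sum>m\<in>UNIV. scaleC (cinner x (\<phi> m)) (\<phi> m)) $ i = x $ i" for i
  proof -
    have "(\<Sum>m\<in>UNIV. scaleC (cinner x (\<phi> m)) (\<phi> m)) $ i
        = (\<Sum>j\<in>UNIV. x$j * (\<Sum>m\<in>UNIV. \<phi> m $ i * cnj (\<phi> m $ j)))"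
      unfolding cinner_cvec scaleC_cvec
      by (simp add: sum_distrib_left sum_distrib_right algebra_simps) (rule sum.swap)
    also have "\<dots> = x $ i"
      by (simp add: orthonormal_complete[OF assms] if_distrib sum.delta cong: if_cong)
    finally show ?thesis .
  qed
  then show ?thesis by (simp add: vec_eq_iff)
qed

lemma matrix_eq_on_orthonormal:
  fixes A B :: "complex^'n^'n" and \<phi> :: "'n \<Rightarrow> complex^'n"
  assumes "orthonormal \<phi>" "\<And>m. A *v \<phi> m = B *v \<phi> m"
  shows "A = B"
proof -
  have "A *v x = B *v x" for x
    by (subst (1 2) orthonormal_expand[OF assms(1), of x])
      (simp add: matrix_vector_mult_sum matrix_vector_mult_scaleC assms(2))
  then show ?thesis by (simp add: matrix_eq)
qed

definition spectral_mat :: "('n \<Rightarrow> complex) \<Rightarrow> ('n \<Rightarrow> complex^'n) \<Rightarrow> complex^'n^'n" where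
  "spectral_mat c \<phi> = (\<chi> i j. \<Sum>m\<in>UNIV. c m * \<phi> m $ i * cnj (\<phi> m $ j))"

lemma spectral_mat_mult_vector:
  "spectral_mat c \<phi> *v x = (\<Sum>m\<in>UNIV. scaleC (c m * cinner x (\<phi> m)) (\<phi> m))"
proof -
  have "(spectral_mat c \<phi> *v x) $ i = (\<Sum>m\<in>UNIV. scaleC (c m * cinner x (\<phi> m)) (\<phi> m)) $ i" for i
  proof -
    have "(spectral_mat c \<phi> *v x) $ i = (\<Sum>m\<in>UNIV. \<Sum>j\<in>UNIV. c m * \<phi> m $ i * cnj (\<phi> m $ j) * x $ j)"
      by (simp add: spectral_mat_def matrix_vector_mult_def sum_distrib_right) (rule sum.swap)
    also have "\<dots> = (\<Sum>m\<in>UNIV. scaleC (c m * cinner x (\<phi> m)) (\<phi> m)) $ i"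
      by (simp add: scaleC_cvec cinner_cvec sum_distrib_left sum_distrib_right algebra_simps)
    finally show ?thesis .
  qed
  then show ?thesis by (simp add: vec_eq_iff)
qed

lemma spectral_mat_eigenvector:
  assumes "orthonormal \<phi>"
  shows "spectral_mat c \<phi> *v \<phi> n = scaleC (c n) (\<phi> n)"
proof -
  have "(\<Sum>m\<in>UNIV. scaleC (c m * cinner (\<phi> n) (\<phi> m)) (\<phi> m))
      = (\<Sum>m\<in>UNIV. if m = n then scaleC (c n) (\<phi> n) else 0)"
    by (rule sum.cong) (auto simp: orthonormalD[OF assms])
  then show ?thesis by (simp add: spectral_mat_mult_vector)
qed

lemma mtrace_spectral_mat:
  assumes "orthonormal \<phi>"
  shows "mtrace (spectral_mat c \<phi>) = sum c UNIV"
proof -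
  have "mtrace (spectral_mat c \<phi>) = (\<Sum>m\<in>UNIV. c m * cinner (\<phi> m) (\<phi> m))"
    by (simp add: mtrace_def spectral_mat_def cinner_cvec sum_distrib_left mult.assoc) (rule sum.swap)
  then show ?thesis using assms by (simp add: orthonormal_def)
qed

lemma spectral_mat_mult:
  assumes "orthonormal \<phi>"
  shows "spectral_mat c \<phi> ** spectral_mat d \<phi> = spectral_mat (\<lambda>m. c m * d m) \<phi>"
  using assms
  by (intro matrix_eq_on_orthonormal[OF assms])
    (simp add: matrix_vector_mul_assoc[symmetric] spectral_mat_eigenvector matrix_vector_mult_scaleC
      scaleC_scaleC mult.commute)

lemma cinner_matrix_quadratic_form:
  "(\<Sum>i\<in>UNIV. \<Sum>j\<in>UNIV. cnj (v$i) * M$i$j * v$j) = cinner ((M::complex^'n^'n) *v v) v"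
  by (simp add: cinner_cvec matrix_vector_mult_def sum_distrib_right sum_distrib_left algebra_simps)

lemma psd_mat_iff: "psd_mat S \<longleftrightarrow> herm S \<and> (\<forall>v. 0 \<le> Re (cinner (S *v v) v))"
  by (simp add: psd_mat_def herm_def cinner_matrix_quadratic_form)

lemma psd_spectral_mat:
  assumes "\<And>m. 0 \<le> \<mu> m"
  shows "psd_mat (spectral_mat (\<lambda>m. of_real (\<mu> m)) \<phi>)"
  unfolding psd_mat_iff
proof (intro conjI allI)
  show "herm (spectral_mat (\<lambda>m. of_real (\<mu> m)) \<phi>)"
    by (simp add: herm_def spectral_mat_def cnj_sum mult.commute mult.left_commute)
next
  fix v
  have "cinner (spectral_mat (\<lambda>m. of_real (\<mu> m)) \<phi> *v v) v
      = (\<Sum>m\<in>UNIV. of_real (\<mu> m * (cmod (cinner v (\<phi> m)))\<^sup>2))"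
    by (simp add: spectral_mat_mult_vector cinner_sum_left cinner_scaleC_left cinner_commute[of "\<phi> _" v]
        mult_cnj_self mult.assoc)
  then show "0 \<le> Re (cinner (spectral_mat (\<lambda>m. of_real (\<mu> m)) \<phi> *v v) v)"
    using assms by (simp add: sum_nonneg del: of_real_power)
qed

text \<open>If S^2 v = mu v then y = (S - sqrt mu) v satisfies S y = - sqrt mu y, which positivity
  of S only allows for y = 0.\<close>

lemma psd_sqrt_eigenvector:
  assumes S: "psd_mat S" and SS: "S *v (S *v v) = scaleC (of_real \<mu>) v" and \<mu>: "0 \<le> \<mu>"
  shows "S *v v = scaleC (of_real (sqrt \<mu>)) v"
proof -
  define s where "s = sqrt \<mu>"
  define y where "y = S *v v - scaleC (of_real s) v"
  have hS: "herm S" and pos: "\<And>v. 0 \<le> Re (cinner (S *v v) v)" using S by (auto simp: psd_mat_iff)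
  have ss: "of_real s * of_real s = (of_real \<mu> :: complex)"
    using \<mu> by (simp add: s_def flip: of_real_mult)
  have "S *v y = scaleC (of_real \<mu>) v - scaleC (of_real s) (S *v v)"
    by (simp add: y_def matrix_vector_mult_diff_distrib matrix_vector_mult_scaleC SS)
  also have "\<dots> = - scaleC (of_real s) y"
    by (simp add: y_def scaleC_diff_right scaleC_scaleC ss)
  finally have Sy: "S *v y = - scaleC (of_real s) y" .
  have "0 \<le> Re (cinner (S *v y) y)" by (rule pos)
  then have "s * (norm y)\<^sup>2 \<le> 0"
    by (simp add: Sy cinner_minus_left cinner_scaleC_left cinner_self_norm del: of_real_power)
  moreover have "y = 0" if "s = 0"
  proof -
    have "cinner y y = cinner v (S *v y)"
      using that herm_cinner_commute[OF hS, of v y] by (simp add: y_def)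
    then show ?thesis using that by (simp add: Sy)
  qed
  ultimately have "y = 0"
    using \<mu> by (cases "s = 0") (auto simp: s_def mult_le_0_iff)
  then show ?thesis by (simp add: y_def s_def)
qed

lemma msqrt_spectral_mat:
  assumes \<phi>: "orthonormal \<phi>" and \<mu>: "\<And>m. 0 \<le> \<mu> m"
  shows "msqrt (spectral_mat (\<lambda>m. of_real (\<mu> m)) \<phi>) = spectral_mat (\<lambda>m. of_real (sqrt (\<mu> m))) \<phi>"
  unfolding msqrt_def
proof (rule the_equality)
  have "of_real (sqrt (\<mu> m)) * of_real (sqrt (\<mu> m)) = (of_real (\<mu> m) :: complex)" for m
    using \<mu>[of m] by (simp flip: of_real_mult)
  then show "psd_mat (spectral_mat (\<lambda>m. of_real (sqrt (\<mu> m))) \<phi>) \<and>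
      spectral_mat (\<lambda>m. of_real (sqrt (\<mu> m))) \<phi> ** spectral_mat (\<lambda>m. of_real (sqrt (\<mu> m))) \<phi>
      = spectral_mat (\<lambda>m. of_real (\<mu> m)) \<phi>"
    using \<mu> by (simp add: psd_spectral_mat spectral_mat_mult[OF \<phi>])
next
  fix S assume S: "psd_mat S \<and> S ** S = spectral_mat (\<lambda>m. of_real (\<mu> m)) \<phi>"
  show "S = spectral_mat (\<lambda>m. of_real (sqrt (\<mu> m))) \<phi>"
  proof (rule matrix_eq_on_orthonormal[OF \<phi>])
    fix m
    have "S *v (S *v \<phi> m) = scaleC (of_real (\<mu> m)) (\<phi> m)"
      using S by (simp add: matrix_vector_mul_assoc spectral_mat_eigenvector[OF \<phi>])
    then show "S *v \<phi> m = spectral_mat (\<lambda>m. of_real (sqrt (\<mu> m))) \<phi> *v \<phi> m"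
      using psd_sqrt_eigenvector[of S "\<phi> m" "\<mu> m"] S \<mu>[of m]
      by (simp add: spectral_mat_eigenvector[OF \<phi>])
  qed
qed

definition gram :: "('n::finite \<Rightarrow> 'a::chilbert_space) \<Rightarrow> complex^'n^'n" where
  "gram u = (\<chi> i j. cinner (u i) (u j))"

definition corthogonal :: "('n \<Rightarrow> 'a::chilbert_space) \<Rightarrow> bool" where
  "corthogonal p \<longleftrightarrow> (\<forall>n n'. n \<noteq> n' \<longrightarrow> cinner (p n) (p n') = 0)"

lemma herm_gram: "herm (gram u)"
  unfolding herm_def gram_def by (simp add: cinner_commute[symmetric])

lemma gram_mult_vector: "(gram u *v c) $ i = cinner (u i) (\<Sum>j\<in>UNIV. scaleC (cnj (c $ j)) (u j))"
  by (simp add: gram_def matrix_vector_mult_def cinner_sum_right cinner_scaleC_right mult.commute)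

lemma cinner_sum_scaleC:
  fixes p q :: "'n::finite \<Rightarrow> 'a::chilbert_space"
  shows "cinner (\<Sum>a\<in>UNIV. scaleC (c a) (p a)) (\<Sum>b\<in>UNIV. scaleC (d b) (q b))
       = (\<Sum>a\<in>UNIV. \<Sum>b\<in>UNIV. c a * cnj (d b) * cinner (p a) (q b))"
  by (simp add: cinner_sum_left cinner_sum_right cinner_scaleC_left cinner_scaleC_right
      sum_distrib_left mult.assoc mult.left_commute) (rule sum.swap)

lemma cinner_corthogonal:
  "corthogonal p \<Longrightarrow> cinner (p n) (p n') = (if n = n' then of_real ((norm (p n))\<^sup>2) else 0)"
  by (simp add: corthogonal_def cinner_self_norm)

lemma gram_orthogonal_decomposition:
  fixes u p :: "'n::finite \<Rightarrow> 'a::chilbert_space"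
  assumes p: "corthogonal p" and u: "\<And>k. u k = (\<Sum>n\<in>UNIV. scaleC (\<psi> n $ k) (p n))"
  shows "gram u = spectral_mat (\<lambda>n. of_real ((norm (p n))\<^sup>2)) \<psi>"
proof -
  have "gram u $ i $ j = (\<Sum>a\<in>UNIV. \<Sum>b\<in>UNIV. if b = a then \<psi> a $ i * cnj (\<psi> a $ j) * of_real ((norm (p a))\<^sup>2) else 0)" for i j
    by (simp add: gram_def u cinner_sum_scaleC cinner_corthogonal[OF p] if_distrib eq_commute
        cong: if_cong)
  then show ?thesis by (simp add: vec_eq_iff spectral_mat_def sum.delta mult.commute mult.left_commute)
qed

text \<open>The psi n are eigenvectors of gram u with eigenvalues (norm (p n))^2, so the trace of the
  square root of gram u is the sum of the norm (p n).\<close>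

lemma S1_norm_vec_orthogonal_decomposition:
  fixes u p :: "'n::finite \<Rightarrow> 'a::chilbert_space"
  assumes \<psi>: "orthonormal \<psi>" and p: "corthogonal p"
    and u: "\<And>k. u k = (\<Sum>n\<in>UNIV. scaleC (\<psi> n $ k) (p n))"
  shows "S1_norm_vec u = (\<Sum>n\<in>UNIV. norm (p n))"
proof -
  have "S1_norm_vec u = Re (mtrace (msqrt (gram u)))"
    by (simp add: S1_norm_vec_def gram_def)
  also have "\<dots> = Re (mtrace (spectral_mat (\<lambda>n. of_real (sqrt ((norm (p n))\<^sup>2))) \<psi>))"
    unfolding gram_orthogonal_decomposition[OF p u] by (subst msqrt_spectral_mat[OF \<psi>]) simp_all
  finally show ?thesis by (simp add: mtrace_spectral_mat[OF \<psi>])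
qed

lemma orthogonal_decomposition_exists:
  fixes u :: "'n::finite \<Rightarrow> 'a::chilbert_space"
  obtains \<psi> :: "'n \<Rightarrow> complex^'n" and p :: "'n \<Rightarrow> 'a"
  where "orthonormal \<psi>" "corthogonal p" "\<And>k. u k = (\<Sum>n\<in>UNIV. scaleC (\<psi> n $ k) (p n))"
proof -
  obtain \<psi> :: "'n \<Rightarrow> complex^'n" and \<nu> where \<psi>: "orthonormal \<psi>"
    and eig: "\<And>n. gram u *v \<psi> n = scaleC (of_real (\<nu> n)) (\<psi> n)"
    using herm_eigenbasis[OF herm_gram] by blast
  define p where "p n = (\<Sum>k\<in>UNIV. scaleC (cnj (\<psi> n $ k)) (u k))" for n
  have "cinner (p n) (p n') = of_real (\<nu> n') * cinner (\<psi> n') (\<psi> n)" for n n'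
  proof -
    have "cinner (p n) (p n') = (\<Sum>k\<in>UNIV. cnj (\<psi> n $ k) * (gram u *v \<psi> n') $ k)"
      by (simp add: p_def gram_mult_vector cinner_sum_left cinner_scaleC_left)
    then show ?thesis
      by (simp add: eig scaleC_cvec cinner_cvec sum_distrib_left mult.commute mult.left_commute)
  qed
  then have "corthogonal p" by (simp add: corthogonal_def orthonormalD[OF \<psi>])
  moreover have "u k = (\<Sum>n\<in>UNIV. scaleC (\<psi> n $ k) (p n))" for k
  proof -
    have "(\<Sum>n\<in>UNIV. scaleC (\<psi> n $ k) (p n))
        = (\<Sum>k'\<in>UNIV. scaleC (\<Sum>n\<in>UNIV. \<psi> n $ k * cnj (\<psi> n $ k')) (u k'))"
      by (simp add: p_def scaleC_sum_right scaleC_scaleC scaleC_sum_left) (rule sum.swap)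
    also have "\<dots> = (\<Sum>k'\<in>UNIV. if k' = k then u k else 0)"
      by (intro sum.cong refl) (simp add: orthonormal_complete[OF \<psi>] scaleC_one)
    finally show ?thesis by simp
  qed
  ultimately show ?thesis using that \<psi> by blast
qed

lemma S1_norm_vec_nonneg: "0 \<le> S1_norm_vec (u :: 'n::finite \<Rightarrow> 'a::chilbert_space)"
  by (rule orthogonal_decomposition_exists[of u])
    (simp add: S1_norm_vec_orthogonal_decomposition sum_nonneg)

lemma S1_norm_vec_unitary:
  fixes u z :: "'n::finite \<Rightarrow> 'a::chilbert_space"
  assumes \<phi>: "orthonormal \<phi>" and u: "\<And>k. u k = (\<Sum>m\<in>UNIV. scaleC (\<phi> m $ k) (z m))"
  shows "S1_norm_vec u = S1_norm_vec z"
proof -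
  obtain \<psi> :: "'n \<Rightarrow> complex^'n" and p where \<psi>: "orthonormal \<psi>" and p: "corthogonal p"
    and z: "\<And>k. z k = (\<Sum>n\<in>UNIV. scaleC (\<psi> n $ k) (p n))"
    using orthogonal_decomposition_exists[of z] by blast
  define \<kappa> :: "'n \<Rightarrow> complex^'n" where "\<kappa> n = (\<Sum>m\<in>UNIV. scaleC (\<psi> n $ m) (\<phi> m))" for n
  have "cinner (\<kappa> n) (\<kappa> n') = cinner (\<psi> n) (\<psi> n')" for n n'
  proof -
    have "cinner (\<kappa> n) (\<kappa> n')
        = (\<Sum>a\<in>UNIV. \<Sum>b\<in>UNIV. if b = a then \<psi> n $ a * cnj (\<psi> n' $ a) else 0)"
      unfolding \<kappa>_def cinner_sum_scaleC by (intro sum.cong refl) (simp add: orthonormalD[OF \<phi>])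
    then show ?thesis by (simp add: sum.delta cinner_cvec)
  qed
  then have \<kappa>: "orthonormal \<kappa>" using \<psi> by (simp add: orthonormal_def)
  have u\<kappa>: "u k = (\<Sum>n\<in>UNIV. scaleC (\<kappa> n $ k) (p n))" for k
  proof -
    have "u k = (\<Sum>m\<in>UNIV. \<Sum>n\<in>UNIV. scaleC (\<phi> m $ k * \<psi> n $ m) (p n))"
      by (simp add: u z scaleC_sum_right scaleC_scaleC)
    also have "\<dots> = (\<Sum>n\<in>UNIV. scaleC (\<kappa> n $ k) (p n))"
      by (subst sum.swap) (simp add: \<kappa>_def scaleC_cvec scaleC_sum_left mult.commute)
    finally show ?thesis .
  qed
  show ?thesis
    using S1_norm_vec_orthogonal_decomposition[OF \<kappa> p u\<kappa>]
      S1_norm_vec_orthogonal_decomposition[OF \<psi> p z] by simp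
qed

text \<open>Besides being orthonormal on J, f has to vanish outside J.\<close>

definition orthonormal_on :: "'n set \<Rightarrow> ('n \<Rightarrow> 'a::chilbert_space) \<Rightarrow> bool" where
  "orthonormal_on J f \<longleftrightarrow> (\<forall>n n'. cinner (f n) (f n') = (if n = n' \<and> n \<in> J then 1 else 0))"

lemma orthonormal_on_zero: "orthonormal_on J f \<Longrightarrow> n \<notin> J \<Longrightarrow> f n = 0"
  unfolding orthonormal_on_def by (metis cinner_self_eq_0)

lemma norm_sum_orthonormal_on:
  fixes f :: "'n::finite \<Rightarrow> 'a::chilbert_space"
  assumes "orthonormal_on J f"
  shows "(norm (\<Sum>n\<in>UNIV. scaleC (c n) (f n)))\<^sup>2 = (\<Sum>n\<in>J. (cmod (c n))\<^sup>2)"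
proof -
  have "cinner (\<Sum>n\<in>UNIV. scaleC (c n) (f n)) (\<Sum>n\<in>UNIV. scaleC (c n) (f n))
      = (\<Sum>a\<in>UNIV. \<Sum>b\<in>UNIV. if b = a then (if a \<in> J then of_real ((cmod (c a))\<^sup>2) else 0) else 0)"
    unfolding cinner_sum_scaleC using assms
    by (intro sum.cong refl) (auto simp: orthonormal_on_def mult_cnj_self)
  also have "\<dots> = of_real (\<Sum>a\<in>J. (cmod (c a))\<^sup>2)"
    by (simp add: sum.delta sum.If_cases del: of_real_power)
  finally show ?thesis by (simp only: cinner_self_norm of_real_eq_iff)
qed

lemma bessel_inequality:
  fixes e :: "'n::finite \<Rightarrow> 'a::chilbert_space"
  assumes e: "orthonormal_on J e"
  shows "(\<Sum>n\<in>J. (cmod (cinner y (e n)))\<^sup>2) \<le> (norm y)\<^sup>2"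
proof -
  define P where "P = (\<Sum>n\<in>UNIV. scaleC (cinner y (e n)) (e n))"
  define s where "s = (\<Sum>n\<in>J. (cmod (cinner y (e n)))\<^sup>2)"
  have nP: "(norm P)\<^sup>2 = s" unfolding P_def s_def by (rule norm_sum_orthonormal_on[OF e])
  have "cinner P y = (\<Sum>n\<in>UNIV. if n \<in> J then of_real ((cmod (cinner y (e n)))\<^sup>2) else 0)"
    unfolding P_def cinner_sum_left cinner_scaleC_left
    by (intro sum.cong refl) (auto simp: orthonormal_on_zero[OF e] cinner_commute[of "e _" y] mult_cnj_self)
  also have "\<dots> = of_real s"
    by (simp add: s_def sum.If_cases del: of_real_power)
  finally have Py: "cinner P y = of_real s" .
  have "0 \<le> (norm (y - P))\<^sup>2" by simp
  also have "\<dots> = Re (cinner y y) - Re (cinner y P) - Re (cinner P y) + Re (cinner P P)"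
    by (simp add: cinner_self_Re[symmetric] cinner_diff_left cinner_diff_right)
  also have "\<dots> = (norm y)\<^sup>2 - s"
    using Py nP by (simp add: cinner_self_Re cinner_commute[of y P])
  finally show ?thesis by (simp add: s_def)
qed

lemma partial_isometry_exists:
  fixes e f :: "'n::finite \<Rightarrow> 'a::chilbert_space"
  assumes e: "orthonormal_on J e" and f: "orthonormal_on J f"
  obtains x where "bounded_clinear x" "onorm x \<le> 1" "\<And>n. n \<in> J \<Longrightarrow> x (e n) = f n"
proof -
  define x where "x y = (\<Sum>n\<in>UNIV. scaleC (cinner y (e n)) (f n))" for y
  have nx: "norm (x y) \<le> norm y" for y
  proof -
    have "(norm (x y))\<^sup>2 \<le> (norm y)\<^sup>2"
      unfolding x_def norm_sum_orthonormal_on[OF f] by (rule bessel_inequality[OF e])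
    then show ?thesis by (simp add: power2_le_iff_abs_le)
  qed
  have x_scaleC: "x (scaleC c y) = scaleC c (x y)" for c y
    by (simp add: x_def cinner_scaleC_left scaleC_sum_right scaleC_scaleC)
  have "bounded_linear x"
  proof (rule bounded_linear_intro[where K = 1])
    show "x (y + y') = x y + x y'" for y y'
      by (simp add: x_def cinner_add_left scaleC_add_left sum.distrib)
    show "x (r *\<^sub>R y) = r *\<^sub>R x y" for r y by (simp add: scaleR_scaleC x_scaleC)
  qed (use nx in simp)
  then have "bounded_clinear x" using x_scaleC by (simp add: bounded_clinear_def)
  moreover have "onorm x \<le> 1" by (rule onorm_bound) (use nx in auto)
  moreover have "x (e n) = f n" if "n \<in> J" for n
  proof -
    have "x (e n) = (\<Sum>m\<in>UNIV. if m = n then f n else 0)"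
      unfolding x_def using e that
      by (intro sum.cong refl) (auto simp: orthonormal_on_def orthonormal_on_zero[OF f] scaleC_one)
    then show ?thesis by simp
  qed
  ultimately show ?thesis using that by blast
qed

lemma orthonormal_on_normalize:
  assumes "corthogonal p"
  shows "orthonormal_on {n. p n \<noteq> 0}
           (\<lambda>n. if p n = 0 then 0 else scaleC (of_real (1 / norm (p n))) (p n))"
  using assms
  by (auto simp: orthonormal_on_def cinner_scaleC_left cinner_scaleC_right cinner_corthogonal
      field_simps power2_eq_square simp flip: of_real_mult)

lemma sum_cinner_bounded_clinear:
  assumes "bounded_clinear x"
  shows "(\<Sum>j\<in>UNIV. cinner (x (\<Sum>m\<in>UNIV. scaleC (c j m) (g m))) (w j))
       = (\<Sum>m\<in>UNIV. cinner (x (g m)) (\<Sum>j\<in>UNIV. scaleC (cnj (c j m)) (w j)))"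
  by (simp add: bounded_clinear_sum[OF assms] cinner_sum_left cinner_sum_right cinner_scaleC_left
      cinner_scaleC_right) (rule sum.swap)

lemma sum_cinner_orthogonal_decomposition:
  assumes "bounded_clinear x" and z: "\<And>k. z k = (\<Sum>n\<in>UNIV. scaleC (\<psi> n $ k) (p n))"
  shows "(\<Sum>m\<in>UNIV. cinner (x (g m)) (z m))
       = (\<Sum>n\<in>UNIV. cinner (x (\<Sum>m\<in>UNIV. scaleC (cnj (\<psi> n $ m)) (g m))) (p n))"
  using sum_cinner_bounded_clinear[OF assms(1), of "\<lambda>n m. cnj (\<psi> n $ m)" g p] by (simp add: z)

lemma norm_sum_orthonormal_on_le_1:
  fixes g :: "'n::finite \<Rightarrow> 'a::chilbert_space" and \<psi> :: "'n \<Rightarrow> complex^'n"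
  assumes g: "orthonormal_on I g" and \<psi>: "orthonormal \<psi>"
  shows "norm (\<Sum>m\<in>UNIV. scaleC (cnj (\<psi> n $ m)) (g m)) \<le> 1"
proof -
  have "(norm (\<Sum>m\<in>UNIV. scaleC (cnj (\<psi> n $ m)) (g m)))\<^sup>2 = (\<Sum>m\<in>I. (cmod (\<psi> n $ m))\<^sup>2)"
    by (simp add: norm_sum_orthonormal_on[OF g])
  also have "\<dots> \<le> (\<Sum>m\<in>UNIV. (cmod (\<psi> n $ m))\<^sup>2)" by (intro sum_mono2) auto
  also have "\<dots> = Re (cinner (\<psi> n) (\<psi> n))"
    by (simp add: cinner_self_Re norm_vec_def L2_set_def sum_nonneg)
  also have "\<dots> = 1\<^sup>2" by (simp add: orthonormalD[OF \<psi>])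
  finally show ?thesis by (rule power2_le_imp_le) simp
qed

lemma orthonormal_on_rotate:
  fixes g :: "'n::finite \<Rightarrow> 'a::chilbert_space" and \<psi> :: "'n \<Rightarrow> complex^'n"
  assumes g: "orthonormal_on I g" and \<psi>: "orthonormal \<psi>"
    and supp: "\<And>n m. n \<in> J \<Longrightarrow> m \<notin> I \<Longrightarrow> \<psi> n $ m = 0"
  shows "orthonormal_on J (\<lambda>n. if n \<in> J then (\<Sum>m\<in>UNIV. scaleC (cnj (\<psi> n $ m)) (g m)) else 0)"
proof -
  have "cinner (\<Sum>m\<in>UNIV. scaleC (cnj (\<psi> n $ m)) (g m)) (\<Sum>m\<in>UNIV. scaleC (cnj (\<psi> n' $ m)) (g m))
      = cinner (\<psi> n') (\<psi> n)" if "n \<in> J" "n' \<in> J" for n n'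
  proof -
    have "cinner (\<Sum>m\<in>UNIV. scaleC (cnj (\<psi> n $ m)) (g m)) (\<Sum>m\<in>UNIV. scaleC (cnj (\<psi> n' $ m)) (g m))
        = (\<Sum>a\<in>UNIV. \<Sum>b\<in>UNIV. if b = a then cnj (\<psi> n $ a) * \<psi> n' $ a else 0)"
      unfolding cinner_sum_scaleC using g supp[OF that(1)]
      by (intro sum.cong refl) (auto simp: orthonormal_on_def)
    then show ?thesis by (simp add: sum.delta cinner_cvec mult.commute)
  qed
  then show ?thesis by (auto simp: orthonormal_on_def orthonormalD[OF \<psi>])
qed

lemma sum_cinner_orthonormal_on_le:
  fixes g z :: "'n::finite \<Rightarrow> 'a::chilbert_space"
  assumes g: "orthonormal_on I g" and x: "bounded_clinear x"
  shows "cmod (\<Sum>m\<in>UNIV. cinner (x (g m)) (z m)) \<le> onorm x * S1_norm_vec z"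
proof -
  obtain \<psi> :: "'n \<Rightarrow> complex^'n" and p where \<psi>: "orthonormal \<psi>" and p: "corthogonal p"
    and z: "\<And>k. z k = (\<Sum>n\<in>UNIV. scaleC (\<psi> n $ k) (p n))"
    using orthogonal_decomposition_exists[of z] by blast
  define G where "G n = (\<Sum>m\<in>UNIV. scaleC (cnj (\<psi> n $ m)) (g m))" for n
  have x_lin: "bounded_linear x" using bounded_clinearD(1)[OF x] .
  have term_le: "cmod (cinner (x (G n)) (p n)) \<le> onorm x * norm (p n)" for n
  proof -
    have "cmod (cinner (x (G n)) (p n)) \<le> onorm x * norm (G n) * norm (p n)"
      using cmod_cinner_le[of "x (G n)" "p n"] onorm[OF x_lin, of "G n"]
      by (meson mult_right_mono norm_ge_zero order_trans)
    also have "\<dots> \<le> onorm x * 1 * norm (p n)"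
      unfolding G_def using norm_sum_orthonormal_on_le_1[OF g \<psi>] onorm_pos_le[OF x_lin]
      by (intro mult_right_mono mult_left_mono) auto
    finally show ?thesis by simp
  qed
  have "cmod (\<Sum>n\<in>UNIV. cinner (x (G n)) (p n)) \<le> (\<Sum>n\<in>UNIV. onorm x * norm (p n))"
    by (rule order_trans[OF norm_sum sum_mono], rule term_le)
  then show ?thesis
    by (simp add: sum_cinner_orthogonal_decomposition[OF x z] G_def[symmetric] sum_distrib_left
        S1_norm_vec_orthogonal_decomposition[OF \<psi> p z])
qed

lemma sum_cinner_orthonormal_on_attained:
  fixes g z :: "'n::finite \<Rightarrow> 'a::chilbert_space"
  assumes g: "orthonormal_on I g" and z0: "\<And>m. m \<notin> I \<Longrightarrow> z m = 0"
  obtains x where "bounded_clinear x" "onorm x \<le> 1"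
    "(\<Sum>m\<in>UNIV. cinner (x (g m)) (z m)) = of_real (S1_norm_vec z)"
proof -
  obtain \<psi> :: "'n \<Rightarrow> complex^'n" and p where \<psi>: "orthonormal \<psi>" and p: "corthogonal p"
    and z: "\<And>k. z k = (\<Sum>n\<in>UNIV. scaleC (\<psi> n $ k) (p n))"
    using orthogonal_decomposition_exists[of z] by blast
  define J where "J = {n. p n \<noteq> 0}"
  define G where "G n = (\<Sum>m\<in>UNIV. scaleC (cnj (\<psi> n $ m)) (g m))" for n
  define f where "f n = (if p n = 0 then 0 else scaleC (of_real (1 / norm (p n))) (p n))" for n
  have "\<psi> n $ m = 0" if "n \<in> J" "m \<notin> I" for n m
  proof -
    have "cinner (z m) (p n) = (\<Sum>n'\<in>UNIV. if n' = n then \<psi> n $ m * of_real ((norm (p n))\<^sup>2) else 0)"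
      unfolding z cinner_sum_left cinner_scaleC_left
      by (intro sum.cong refl) (simp add: cinner_corthogonal[OF p])
    then show ?thesis using z0[OF that(2)] that(1) by (simp add: J_def)
  qed
  then have "orthonormal_on J (\<lambda>n. if n \<in> J then G n else 0)"
    unfolding G_def by (rule orthonormal_on_rotate[OF g \<psi>])
  moreover have "orthonormal_on J f"
    unfolding J_def f_def by (rule orthonormal_on_normalize[OF p])
  ultimately obtain x where x: "bounded_clinear x" "onorm x \<le> 1" and xG: "\<And>n. n \<in> J \<Longrightarrow> x (G n) = f n"
    by (rule partial_isometry_exists) auto
  have "cinner (x (G n)) (p n) = of_real (norm (p n))" for n
  proof (cases "n \<in> J")
    case True
    then show ?thesis
      by (simp add: xG J_def f_def cinner_scaleC_left cinner_self_norm power2_eq_square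
          flip: of_real_mult of_real_divide)
  qed (simp add: J_def)
  then have "(\<Sum>m\<in>UNIV. cinner (x (g m)) (z m)) = of_real (S1_norm_vec z)"
    by (simp add: sum_cinner_orthogonal_decomposition[OF x(1) z] G_def[symmetric]
        S1_norm_vec_orthogonal_decomposition[OF \<psi> p z])
  then show ?thesis using that x by blast
qed

text \<open>Diagonalising gram v as v j = sum_m phi m j h m with orthogonal h and writing
  h m = norm (h m) g m, the functional becomes sum_m cinner (x (g m)) (z m), while the column
  sqrt (gram v) w is the rotation of z by the unitary phi.\<close>

lemma sum_cinner_reduce_to_orthonormal:
  fixes v w :: "'n::finite \<Rightarrow> 'a::chilbert_space"
  obtains I :: "'n set" and g z :: "'n \<Rightarrow> 'a" where "orthonormal_on I g" "\<And>m. m \<notin> I \<Longrightarrow> z m = 0"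
    "S1_norm_vec (\<lambda>k. \<Sum>j\<in>UNIV. scaleC (msqrt (gram v) $ k $ j) (w j)) = S1_norm_vec z"
    "\<And>x. bounded_clinear x \<Longrightarrow> (\<Sum>j\<in>UNIV. cinner (x (v j)) (w j)) = (\<Sum>m\<in>UNIV. cinner (x (g m)) (z m))"
proof -
  obtain \<phi> :: "'n \<Rightarrow> complex^'n" and h where \<phi>: "orthonormal \<phi>" and h: "corthogonal h"
    and v: "\<And>k. v k = (\<Sum>m\<in>UNIV. scaleC (\<phi> m $ k) (h m))"
    using orthogonal_decomposition_exists[of v] by blast
  define I where "I = {m. h m \<noteq> 0}"
  define g where "g m = (if h m = 0 then 0 else scaleC (of_real (1 / norm (h m))) (h m))" for m
  define z where "z m = (\<Sum>j\<in>UNIV. scaleC (of_real (norm (h m)) * cnj (\<phi> m $ j)) (w j))" for m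
  have g: "orthonormal_on I g" unfolding I_def g_def by (rule orthonormal_on_normalize[OF h])
  have z0: "z m = 0" if "m \<notin> I" for m using that by (simp add: I_def z_def)
  have sqrt_gram: "msqrt (gram v) = spectral_mat (\<lambda>m. of_real (norm (h m))) \<phi>"
    using msqrt_spectral_mat[OF \<phi>, of "\<lambda>m. (norm (h m))\<^sup>2"]
    by (simp add: gram_orthogonal_decomposition[OF h v])
  have S1: "S1_norm_vec (\<lambda>k. \<Sum>j\<in>UNIV. scaleC (msqrt (gram v) $ k $ j) (w j)) = S1_norm_vec z"
  proof (rule S1_norm_vec_unitary[OF \<phi>])
    fix k
    have "(\<Sum>j\<in>UNIV. scaleC (msqrt (gram v) $ k $ j) (w j))
        = (\<Sum>j\<in>UNIV. \<Sum>m\<in>UNIV. scaleC (\<phi> m $ k * (of_real (norm (h m)) * cnj (\<phi> m $ j))) (w j))"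
      by (simp add: sqrt_gram spectral_mat_def scaleC_sum_left mult.commute mult.left_commute)
    also have "\<dots> = (\<Sum>m\<in>UNIV. scaleC (\<phi> m $ k) (z m))"
      by (subst sum.swap) (simp add: z_def scaleC_sum_right scaleC_scaleC)
    finally show "(\<Sum>j\<in>UNIV. scaleC (msqrt (gram v) $ k $ j) (w j)) = (\<Sum>m\<in>UNIV. scaleC (\<phi> m $ k) (z m))" .
  qed
  have sum_eq: "(\<Sum>j\<in>UNIV. cinner (x (v j)) (w j)) = (\<Sum>m\<in>UNIV. cinner (x (g m)) (z m))"
    if x: "bounded_clinear x" for x
  proof -
    have hg: "scaleC (of_real (norm (h m))) (g m) = h m" for m
      by (simp add: g_def scaleC_scaleC scaleC_one flip: of_real_mult)
    have "v j = (\<Sum>m\<in>UNIV. scaleC (\<phi> m $ j * of_real (norm (h m))) (g m))" for j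
      unfolding v by (intro sum.cong refl) (simp add: scaleC_scaleC[symmetric] hg)
    then show ?thesis
      using sum_cinner_bounded_clinear[OF x, of "\<lambda>j m. \<phi> m $ j * of_real (norm (h m))" g w]
      by (simp add: z_def mult.commute)
  qed
  show ?thesis by (rule that[OF g z0 S1 sum_eq])
qed

lemma sum_cinner_le_S1_norm_vec:
  fixes v w :: "'n::finite \<Rightarrow> 'a::chilbert_space"
  assumes x: "bounded_clinear x"
  shows "cmod (\<Sum>j\<in>UNIV. cinner (x (v j)) (w j))
           \<le> onorm x * S1_norm_vec (\<lambda>k. \<Sum>j\<in>UNIV. scaleC (msqrt (gram v) $ k $ j) (w j))"
proof (rule sum_cinner_reduce_to_orthonormal[of v w])
  fix I g z
  assume g: "orthonormal_on I g"
    and S1: "S1_norm_vec (\<lambda>k. \<Sum>j\<in>UNIV. scaleC (msqrt (gram v) $ k $ j) (w j)) = S1_norm_vec z"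
    and sum_eq: "\<And>x. bounded_clinear x \<Longrightarrow>
      (\<Sum>j\<in>UNIV. cinner (x (v j)) (w j)) = (\<Sum>m\<in>UNIV. cinner (x (g m)) (z m))"
  show ?thesis
    unfolding S1 sum_eq[OF x] by (rule sum_cinner_orthonormal_on_le[OF g x])
qed

lemma sum_cinner_S1_norm_vec_attained:
  fixes v w :: "'n::finite \<Rightarrow> 'a::chilbert_space"
  obtains x where "bounded_clinear x" "onorm x \<le> 1"
    "(\<Sum>j\<in>UNIV. cinner (x (v j)) (w j))
       = of_real (S1_norm_vec (\<lambda>k. \<Sum>j\<in>UNIV. scaleC (msqrt (gram v) $ k $ j) (w j)))"
proof (rule sum_cinner_reduce_to_orthonormal[of v w])
  fix I g z
  assume g: "orthonormal_on I g" and z0: "\<And>m. m \<notin> I \<Longrightarrow> z m = 0"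
    and S1: "S1_norm_vec (\<lambda>k. \<Sum>j\<in>UNIV. scaleC (msqrt (gram v) $ k $ j) (w j)) = S1_norm_vec z"
    and sum_eq: "\<And>x. bounded_clinear x \<Longrightarrow>
      (\<Sum>j\<in>UNIV. cinner (x (v j)) (w j)) = (\<Sum>m\<in>UNIV. cinner (x (g m)) (z m))"
  show ?thesis
  proof (rule sum_cinner_orthonormal_on_attained[OF g z0])
    fix x assume "bounded_clinear x" "onorm x \<le> 1"
      "(\<Sum>m\<in>UNIV. cinner (x (g m)) (z m)) = of_real (S1_norm_vec z)"
    then show ?thesis using that sum_eq S1 by simp
  qed
qed

lemma norm_le_cinner_bound:
  fixes w :: "'a::chilbert_space"
  assumes "0 \<le> C" and bound: "\<And>\<xi>. norm \<xi> = 1 \<Longrightarrow> cmod (cinner w \<xi>) \<le> C"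
  shows "norm w \<le> C"
proof (cases "w = 0")
  case False
  define \<xi> where "\<xi> = scaleC (of_real (1 / norm w)) w"
  have "norm \<xi> = 1" using False by (simp add: \<xi>_def norm_scaleC norm_divide)
  moreover have "cinner w \<xi> = of_real (norm w)"
    using False by (simp add: \<xi>_def cinner_scaleC_right cinner_self_norm power2_eq_square
        flip: of_real_mult of_real_divide)
  ultimately show ?thesis using bound[of \<xi>] by simp
qed (simp add: assms(1))

lemma onorm_le_cinner_bound:
  fixes f :: "'a::chilbert_space \<Rightarrow> 'a"
  assumes f: "bounded_linear f" and "0 \<le> C"
    and bound: "\<And>\<eta> \<xi>. norm \<eta> = 1 \<Longrightarrow> norm \<xi> = 1 \<Longrightarrow> cmod (cinner (f \<eta>) \<xi>) \<le> C"
  shows "onorm f \<le> C"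
proof (rule onorm_bound[OF \<open>0 \<le> C\<close>])
  interpret bounded_linear f by (rule f)
  fix \<eta>
  show "norm (f \<eta>) \<le> C * norm \<eta>"
  proof (cases "\<eta> = 0")
    case False
    define \<eta>1 where "\<eta>1 = (1 / norm \<eta>) *\<^sub>R \<eta>"
    have \<eta>1: "norm \<eta>1 = 1" using False by (simp add: \<eta>1_def)
    have "f \<eta> = f (norm \<eta> *\<^sub>R \<eta>1)" using False by (simp add: \<eta>1_def)
    also have "\<dots> = norm \<eta> *\<^sub>R f \<eta>1" by (rule scale)
    finally have f\<eta>: "f \<eta> = norm \<eta> *\<^sub>R f \<eta>1" .
    have "cinner (f \<eta>) \<xi> = of_real (norm \<eta>) * cinner (f \<eta>1) \<xi>" for \<xi>
      unfolding f\<eta> scaleR_scaleC by (rule cinner_scaleC_left)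
    then have "cmod (cinner (f \<eta>) \<xi>) = norm \<eta> * cmod (cinner (f \<eta>1) \<xi>)" for \<xi>
      by (simp add: norm_mult)
    then have "cmod (cinner (f \<eta>) \<xi>) \<le> C * norm \<eta>" if "norm \<xi> = 1" for \<xi>
      using mult_left_mono[OF bound[OF \<eta>1 that] norm_ge_zero[of \<eta>]] by (simp add: mult.commute)
    moreover have "0 \<le> C * norm \<eta>" using \<open>0 \<le> C\<close> by simp
    ultimately show ?thesis by (rule norm_le_cinner_bound[rotated])
  qed (simp add: zero)
qed

lemma le_onorm_of_cinner_eq:
  assumes f: "bounded_linear f" and eq: "cinner (f \<eta>) \<xi> = of_real r"
    and "norm \<eta> = 1" "norm \<xi> \<le> 1"
  shows "r \<le> onorm f"
proof -
  have "r \<le> cmod (cinner (f \<eta>) \<xi>)" by (simp add: eq)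
  also have "\<dots> \<le> norm (f \<eta>) * norm \<xi>" by (rule cmod_cinner_le)
  also have "\<dots> \<le> onorm f * norm \<eta> * 1"
    using onorm[OF f, of \<eta>] onorm_pos_le[OF f] assms(3,4) by (intro mult_mono) auto
  finally show ?thesis using assms(3) by simp
qed

lemma BH_map_norm_eq_Sup:
  fixes T :: "('a::chilbert_space \<Rightarrow> 'a) \<Rightarrow> 'a \<Rightarrow> 'a" and F :: "'a \<Rightarrow> 'a \<Rightarrow> real"
  assumes nontrivial: "\<exists>\<eta>::'a. \<eta> \<noteq> 0"
    and T_lin: "\<And>x. bounded_clinear x \<Longrightarrow> bounded_linear (T x)"
    and T_bdd: "\<And>x. bounded_clinear x \<Longrightarrow> onorm (T x) \<le> K * onorm x"
    and F_nonneg: "\<And>\<eta> \<xi>. 0 \<le> F \<eta> \<xi>"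
    and upper: "\<And>x \<eta> \<xi>. bounded_clinear x \<Longrightarrow> cmod (cinner (T x \<eta>) \<xi>) \<le> onorm x * F \<eta> \<xi>"
    and attained: "\<And>\<eta> \<xi>. \<exists>x. bounded_clinear x \<and> onorm x \<le> 1 \<and> cinner (T x \<eta>) \<xi> = of_real (F \<eta> \<xi>)"
  shows "BH_map_norm T = Sup {Sup {F \<eta> \<xi> | \<xi>. norm \<xi> \<le> 1} | \<eta>. norm \<eta> = 1}"
proof -
  define A where "A = {onorm (T x) | x. bounded_clinear x \<and> onorm x \<le> 1}"
  define B where "B \<eta> = {F \<eta> \<xi> | \<xi>. norm \<xi> \<le> 1}" for \<eta>
  define C where "C = {Sup (B \<eta>) | \<eta>. norm \<eta> = 1}"
  have "bounded_clinear (\<lambda>_. 0 :: 'a)" by (simp add: bounded_clinear_def)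
  then have A_ne: "A \<noteq> {}" by (auto simp: A_def onorm_zero)
  have "onorm (T x) \<le> \<bar>K\<bar>" if "bounded_clinear x" "onorm x \<le> 1" for x
    using T_bdd[OF that(1)] mult_left_le[OF that(2) abs_ge_zero[of K]]
      mult_right_mono[OF abs_ge_self[of K] onorm_pos_le[OF bounded_clinearD(1)[OF that(1)]]]
    by linarith
  then have A_bdd: "bdd_above A" by (auto simp: A_def bdd_above_def)
  have F_le: "F \<eta> \<xi> \<le> Sup A" if "norm \<eta> = 1" "norm \<xi> \<le> 1" for \<eta> \<xi>
  proof -
    obtain x where x: "bounded_clinear x" "onorm x \<le> 1" and eq: "cinner (T x \<eta>) \<xi> = of_real (F \<eta> \<xi>)"
      using attained by blast
    have "F \<eta> \<xi> \<le> onorm (T x)" by (rule le_onorm_of_cinner_eq[OF T_lin[OF x(1)] eq that])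
    also have "\<dots> \<le> Sup A" using x A_bdd by (auto simp: A_def intro: cSup_upper)
    finally show ?thesis .
  qed
  have "F \<eta> 0 \<in> B \<eta>" for \<eta> unfolding B_def by (intro CollectI exI[of _ 0]) simp
  then have B_ne: "B \<eta> \<noteq> {}" for \<eta> by blast
  have B_le: "Sup (B \<eta>) \<le> Sup A" if "norm \<eta> = 1" for \<eta>
    using F_le[OF that] by (intro cSup_least B_ne) (auto simp: B_def)
  obtain \<eta>1 :: 'a where "\<eta>1 \<noteq> 0" using nontrivial by blast
  then have \<eta>0: "norm (sgn \<eta>1) = 1" by (simp add: norm_sgn)
  then have C_ne: "C \<noteq> {}" by (auto simp: C_def)
  have C_bdd: "bdd_above C" using B_le by (auto simp: C_def bdd_above_def)
  have F_le_C: "F \<eta> \<xi> \<le> Sup C" if "norm \<eta> = 1" "norm \<xi> \<le> 1" for \<eta> \<xi>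
  proof -
    have "F \<eta> \<xi> \<le> Sup (B \<eta>)"
      using that F_le[OF that(1)] by (intro cSup_upper) (auto simp: B_def bdd_above_def)
    also have "\<dots> \<le> Sup C" using that C_bdd by (auto simp: C_def intro: cSup_upper)
    finally show ?thesis .
  qed
  have "Sup A \<le> Sup C"
  proof (rule cSup_least[OF A_ne])
    fix y assume "y \<in> A"
    then obtain x where x: "bounded_clinear x" "onorm x \<le> 1" and y: "y = onorm (T x)"
      by (auto simp: A_def)
    have "cmod (cinner (T x \<eta>) \<xi>) \<le> Sup C" if "norm \<eta> = 1" "norm \<xi> = 1" for \<eta> \<xi>
    proof -
      have "cmod (cinner (T x \<eta>) \<xi>) \<le> onorm x * F \<eta> \<xi>" by (rule upper[OF x(1)])
      also have "\<dots> \<le> F \<eta> \<xi>"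
        by (rule mult_left_le_one_le[OF F_nonneg onorm_pos_le[OF bounded_clinearD(1)[OF x(1)]] x(2)])
      also have "\<dots> \<le> Sup C" using F_le_C that by simp
      finally show ?thesis .
    qed
    moreover have "0 \<le> Sup C" using F_le_C[OF \<eta>0, of 0] F_nonneg[of "sgn \<eta>1" 0] by simp
    ultimately show "y \<le> Sup C" unfolding y by (rule onorm_le_cinner_bound[OF T_lin[OF x(1)], rotated])
  qed
  moreover have "Sup C \<le> Sup A" using B_le by (intro cSup_least C_ne) (auto simp: C_def)
  ultimately show ?thesis by (simp add: BH_map_norm_def A_def B_def C_def)
qed

lemma cinner_elem_op:
  assumes "\<And>j. bounded_clinear (a j)"
  shows "cinner (elem_op a b x \<eta>) \<xi> = (\<Sum>j\<in>UNIV. cinner (x (b j \<eta>)) (adj (a j) \<xi>))"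
  by (simp add: elem_op_def cinner_sum_left cinner_adj[OF assms])

lemma bounded_linear_elem_op:
  assumes "\<And>j. bounded_clinear (a j)" "\<And>j. bounded_clinear (b j)" "bounded_clinear x"
  shows "bounded_linear (elem_op a b x)"
  unfolding elem_op_def
  using bounded_linear_compose[OF bounded_clinearD(1)[OF assms(1)]
      bounded_linear_compose[OF bounded_clinearD(1)[OF assms(3)] bounded_clinearD(1)[OF assms(2)]]]
  by (rule bounded_linear_sum)

lemma onorm_elem_op_le:
  assumes a: "\<And>j. bounded_clinear (a j)" and b: "\<And>j. bounded_clinear (b j)" and x: "bounded_clinear x"
  shows "onorm (elem_op a b x) \<le> (\<Sum>j\<in>UNIV. onorm (a j) * onorm (b j)) * onorm x"
proof (rule onorm_bound)
  have a_lin: "bounded_linear (a j)" and b_lin: "bounded_linear (b j)" for j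
    using a b by (simp_all add: bounded_clinear_def)
  have x_lin: "bounded_linear x" using x by (simp add: bounded_clinear_def)
  show "0 \<le> (\<Sum>j\<in>UNIV. onorm (a j) * onorm (b j)) * onorm x"
    by (intro mult_nonneg_nonneg sum_nonneg onorm_pos_le a_lin b_lin x_lin)
  fix \<eta>
  have "norm (a j (x (b j \<eta>))) \<le> onorm (a j) * onorm (b j) * onorm x * norm \<eta>" for j
  proof -
    have "norm (a j (x (b j \<eta>))) \<le> onorm (a j) * norm (x (b j \<eta>))"
      by (rule onorm[OF a_lin])
    also have "\<dots> \<le> onorm (a j) * (onorm x * norm (b j \<eta>))"
      by (intro mult_left_mono onorm[OF x_lin] onorm_pos_le[OF a_lin])
    also have "\<dots> \<le> onorm (a j) * (onorm x * (onorm (b j) * norm \<eta>))"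
      by (intro mult_left_mono onorm[OF b_lin] onorm_pos_le[OF a_lin] onorm_pos_le[OF x_lin])
    finally show ?thesis by (simp add: ac_simps)
  qed
  then have "norm (elem_op a b x \<eta>) \<le> (\<Sum>j\<in>UNIV. onorm (a j) * onorm (b j) * onorm x * norm \<eta>)"
    unfolding elem_op_def by (rule order_trans[OF norm_sum sum_mono])
  then show "norm (elem_op a b x \<eta>) \<le> (\<Sum>j\<in>UNIV. onorm (a j) * onorm (b j)) * onorm x * norm \<eta>"
    by (simp add: sum_distrib_right)
qed

lemma transpose_Qmat: "transpose (Qmat b \<eta>) = gram (\<lambda>j. b j \<eta>)"
  by (simp add: vec_eq_iff transpose_def Qmat_def gram_def)

theorem theorem1p10:
  fixes a b :: "'n::finite \<Rightarrow> ('a::chilbert_space \<Rightarrow> 'a)"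
  assumes "\<exists>x::'a. x \<noteq> 0"
    and "\<And>j. bounded_clinear (a j)"
    and "\<And>j. bounded_clinear (b j)"
  shows "BH_map_norm (elem_op a b) =
    Sup {S1_norm_col (mat_times_adj_col (msqrt (transpose (Qmat b \<eta>))) a) | \<eta>. norm \<eta> = 1}"
proof -
  define F where "F \<eta> \<xi> = S1_norm_vec (\<lambda>k. mat_times_adj_col (msqrt (transpose (Qmat b \<eta>))) a k \<xi>)"
    for \<eta> \<xi>
  have F: "F \<eta> \<xi> = S1_norm_vec (\<lambda>k. \<Sum>j\<in>UNIV. scaleC (msqrt (gram (\<lambda>j. b j \<eta>)) $ k $ j) (adj (a j) \<xi>))"
    for \<eta> \<xi>
    by (simp add: F_def mat_times_adj_col_def transpose_Qmat)
  have "BH_map_norm (elem_op a b) = Sup {Sup {F \<eta> \<xi> | \<xi>. norm \<xi> \<le> 1} | \<eta>. norm \<eta> = 1}"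
  proof (rule BH_map_norm_eq_Sup[OF assms(1) bounded_linear_elem_op[OF assms(2,3)]
        onorm_elem_op_le[OF assms(2,3)]])
    fix x :: "'a \<Rightarrow> 'a" and \<eta> \<xi> :: 'a
    show "0 \<le> F \<eta> \<xi>" by (simp add: F_def S1_norm_vec_nonneg)
    show "cmod (cinner (elem_op a b x \<eta>) \<xi>) \<le> onorm x * F \<eta> \<xi>" if "bounded_clinear x"
      unfolding F cinner_elem_op[OF assms(2)] by (rule sum_cinner_le_S1_norm_vec[OF that])
    show "\<exists>x. bounded_clinear x \<and> onorm x \<le> 1 \<and> cinner (elem_op a b x \<eta>) \<xi> = of_real (F \<eta> \<xi>)"
      unfolding F cinner_elem_op[OF assms(2)]
      by (rule sum_cinner_S1_norm_vec_attained[of "\<lambda>j. b j \<eta>" "\<lambda>j. adj (a j) \<xi>"]) blast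
  qed
  then show ?thesis by (simp add: S1_norm_col_def F_def)
qed

end
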